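(* For a greedy policy and an alternating policy applied to the same label sequences, with match counts $M_{\mathbf G}(n)$ and $M_{\mathbf A}(n)$ respectively, $$\lim_{n\to\infty}\frac{\mathbb E\bigl(M_{\mathbf G}(n)-M_{\mathbf A}(n)\bigr)}{n}=\frac{\sigma_{\mathbf R}^2+\sigma_{\mathbf S}^2}{8\mu}.$$
   Context: Let $(r_i)_{i\ge1}$, $(s_i)_{i\ge1}$ be probability vectors on the positive integers with $\mu:=\sum_i r_is_i>0$. Let $\{L_{\mathbf R}(n)\}_{n\ge1}$, $\{L_{\mathbf S}(n)\}_{n\ge1}$ be independent i.i.d. sequences with $\Pr(L_{\mathbf R}(1)=i)=r_i$, $\Pr(L_{\mathbf S}(1)=i)=s_i$. For $m\ge0$ let $\tilde N_{\mathbf R}(m)$ be the vector with entries $N_{\mathbf R}(m,i)=\sum_{j=1}^m\mathbf 1\{L_{\mathbf R}(j)=i\}$, and $\tilde N_{\mathbf S}(m)$ analogously. Put $X_{\mathbf R}(n)=s_{L_{\mathbf R}(n)}$, $X_{\mathbf S}(n)=r_{L_{\mathbf S}(n)}$ (common mean $\mu$, variances $\sigma_{\mathbf R}^2,\sigma_{\mathbf S}^2$; standing assumption $\sigma_{\mathbf R}+\sigma_{\mathbf S}>0$), $\Gamma_{\mathbf R}[m]=\sum_{j=1}^mX_{\mathbf R}(j)$, $\Gamma_{\mathbf S}[m]=\sum_{j=1}^mX_{\mathbf S}(j)$. A reading policy is a $\{0,1\}$-valued process $C(n)$ ($C(n)=1$ iff the $n$-th record is read from $\mathbf R$), $R(n)=\sum_{j\le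 n}C(j)$, $S(n)=n-R(n)$, with $C(n)$ being $\mathcal F_{n-1}$-measurable where $\mathcal F_n=\mathcal F_0\vee\sigma(L_{\mathbf R}(1),\dots,L_{\mathbf R}(R(n));L_{\mathbf S}(1),\dots,L_{\mathbf S}(S(n)))$ and $\mathcal F_0$ (randomization, for both policies) is independent of the labels. Matches: $M(n)=\tilde N_{\mathbf R}(R(n))\cdot\tilde N_{\mathbf S}(S(n))$. An alternating policy is $\mathcal F_0$-measurable with $R(2n)=n$ for all $n$. A greedy policy satisfies, for $n\ge1$, $C(n+1)=1$ if $\Gamma_{\mathbf S}[S(n)]>\Gamma_{\mathbf R}[R(n)]$ and $C(n+1)=0$ if $\Gamma_{\mathbf S}[S(n)]<\Gamma_{\mathbf R}[R(n)]$ (ties arbitrary). *)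

theory Defs
  imports "HOL-Probability.Probability"
begin

text \<open>C n w = True iff the n-th record (n >= 1) is read from R.\<close>

definition Rcnt :: "(nat \<Rightarrow> 'a \<Rightarrow> bool) \<Rightarrow> nat \<Rightarrow> 'a \<Rightarrow> nat" where
  "Rcnt C n w = card {j \<in> {1..n}. C j w}"

definition Scnt :: "(nat \<Rightarrow> 'a \<Rightarrow> bool) \<Rightarrow> nat \<Rightarrow> 'a \<Rightarrow> nat" where
  "Scnt C n w = n - Rcnt C n w"

definition Ncnt :: "(nat \<Rightarrow> 'a \<Rightarrow> nat) \<Rightarrow> nat \<Rightarrow> nat \<Rightarrow> 'a \<Rightarrow> nat" where
  "Ncnt L m i w = card {j \<in> {1..m}. L j w = i}"

text \<open>M(n) = N_R(R(n)) . N_S(S(n)) (dot product; only finitely many nonzero terms).\<close>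
definition matches ::
  "(nat \<Rightarrow> 'a \<Rightarrow> nat) \<Rightarrow> (nat \<Rightarrow> 'a \<Rightarrow> nat) \<Rightarrow> (nat \<Rightarrow> 'a \<Rightarrow> bool) \<Rightarrow> nat \<Rightarrow> 'a \<Rightarrow> nat" where
  "matches LR LS C n w =
     (\<Sum>i | 0 < Ncnt LR (Rcnt C n w) i w.
        Ncnt LR (Rcnt C n w) i w * Ncnt LS (Scnt C n w) i w)"

text \<open>Gamma[m] = sum_{j=1}^m wt(L j); Gamma_R uses wt = s on L_R, Gamma_S uses wt = r on L_S.\<close>
definition Gamma :: "(nat \<Rightarrow> real) \<Rightarrow> (nat \<Rightarrow> 'a \<Rightarrow> nat) \<Rightarrow> nat \<Rightarrow> 'a \<Rightarrow> real" where
  "Gamma wt L m w = (\<Sum>j = 1..m. wt (L j w))"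

text \<open>The first m labels of a sequence (None marks "not yet read").\<close>
definition trunc :: "(nat \<Rightarrow> 'a \<Rightarrow> nat) \<Rightarrow> nat \<Rightarrow> 'a \<Rightarrow> nat \<Rightarrow> nat option" where
  "trunc L m w = (\<lambda>j. if 1 \<le> j \<and> j \<le> m then Some (L j w) else None)"

text \<open>F_n = F_0 v sigma(L_R(1..R(n)), L_S(1..S(n))), with F_0 = sigma(U).\<close>
definition info_alg ::
  "'a measure \<Rightarrow> ('a \<Rightarrow> 'u) \<Rightarrow> 'u measure \<Rightarrow> (nat \<Rightarrow> 'a \<Rightarrow> nat) \<Rightarrow> (nat \<Rightarrow> 'a \<Rightarrow> nat)
    \<Rightarrow> (nat \<Rightarrow> 'a \<Rightarrow> bool) \<Rightarrow> nat \<Rightarrow> 'a measure" where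
  "info_alg M U N LR LS C n =
     vimage_algebra (space M)
       (\<lambda>w. (U w, trunc LR (Rcnt C n w) w, trunc LS (Scnt C n w) w))
       (N \<Otimes>\<^sub>M (PiM UNIV (\<lambda>_::nat. count_space UNIV) \<Otimes>\<^sub>M PiM UNIV (\<lambda>_::nat. count_space UNIV)))"

definition reading_policy ::
  "'a measure \<Rightarrow> ('a \<Rightarrow> 'u) \<Rightarrow> 'u measure \<Rightarrow> (nat \<Rightarrow> 'a \<Rightarrow> nat) \<Rightarrow> (nat \<Rightarrow> 'a \<Rightarrow> nat)
    \<Rightarrow> (nat \<Rightarrow> 'a \<Rightarrow> bool) \<Rightarrow> bool" where
  "reading_policy M U N LR LS C \<longleftrightarrow>
     (\<forall>n\<ge>1. C n \<in> measurable (info_alg M U N LR LS C (n - 1)) (count_space UNIV))"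

definition greedy_policy ::
  "'a measure \<Rightarrow> ('a \<Rightarrow> 'u) \<Rightarrow> 'u measure \<Rightarrow> (nat \<Rightarrow> real) \<Rightarrow> (nat \<Rightarrow> real)
    \<Rightarrow> (nat \<Rightarrow> 'a \<Rightarrow> nat) \<Rightarrow> (nat \<Rightarrow> 'a \<Rightarrow> nat) \<Rightarrow> (nat \<Rightarrow> 'a \<Rightarrow> bool) \<Rightarrow> bool" where
  "greedy_policy M U N r s LR LS C \<longleftrightarrow>
     reading_policy M U N LR LS C \<and>
     (\<forall>n\<ge>1. \<forall>w\<in>space M.
        (Gamma r LS (Scnt C n w) w > Gamma s LR (Rcnt C n w) w \<longrightarrow> C (Suc n) w) \<and>
        (Gamma r LS (Scnt C n w) w < Gamma s LR (Rcnt C n w) w \<longrightarrow> \<not> C (Suc n) w))"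

definition alternating_policy ::
  "'a measure \<Rightarrow> ('a \<Rightarrow> 'u) \<Rightarrow> 'u measure \<Rightarrow> (nat \<Rightarrow> 'a \<Rightarrow> bool) \<Rightarrow> bool" where
  "alternating_policy M U N C \<longleftrightarrow>
     (\<forall>n. C n \<in> measurable (vimage_algebra (space M) U N) (count_space UNIV)) \<and>
     (\<forall>n. \<forall>w\<in>space M. Rcnt C (2 * n) w = n)"

end

theory Submission
  imports Defs
begin

text \<open>Write \<open>gammaR n = \<Gamma>\<^sub>R[R(n)]\<close> and \<open>gammaS n = \<Gamma>\<^sub>S[S(n)]\<close>. Whatever the reading policy, the label
  read next is independent of everything observed so far. Hence a fresh \<open>R\<close>-label creates
  \<open>gammaS\<close> matches on average and raises \<open>gammaR * gammaS\<close> by \<open>mu * gammaS\<close> on average, which gives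
  \<open>mu * E M(n) = E (gammaR n * gammaS n)\<close>; similarly \<open>E (gammaR n + gammaS n)\<^sup>2\<close> is computed exactly
  in terms of the expected number of \<open>R\<close>-reads. Now \<open>4 gammaR gammaS = (gammaR + gammaS)\<^sup>2 - (gammaR - gammaS)\<^sup>2\<close>.
  The greedy policy keeps \<open>\<bar>gammaR - gammaS\<bar> \<le> 1\<close>, so up to a bounded error
  \<open>4 mu E M\<^sub>G(n) = mu\<^sup>2 n\<^sup>2 + n (\<sigma>\<^sub>R\<^sup>2 + \<sigma>\<^sub>S\<^sup>2) / 2\<close>, while for the alternating policy
  \<open>4 E M\<^sub>A(n) = mu (n\<^sup>2 - n mod 2)\<close> exactly.\<close>

lemma sums_one_le_one:
  fixes p :: "nat \<Rightarrow> real"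
  assumes "\<And>i. 0 \<le> p i" "p sums 1"
  shows "p i \<le> 1"
proof -
  have "sum p {i} \<le> suminf p"
    using assms by (intro sum_le_suminf) (auto simp: sums_iff)
  with assms(2) show ?thesis by (simp add: sums_iff)
qed

lemma tendsto_divide_of_bounded_deviation:
  fixes f :: "nat \<Rightarrow> real"
  assumes "\<And>n. \<bar>f n - c * real n\<bar> \<le> K"
  shows "(\<lambda>n. f n / real n) \<longlonglongrightarrow> c"
proof -
  have "(\<lambda>n. f n / real n - c) \<longlonglongrightarrow> 0"
  proof (rule tendsto_0_le[OF lim_const_over_n[of 1], where K=K])
    show "\<forall>\<^sub>F n in sequentially. norm (f n / real n - c) \<le> norm (1 / real n) * K"
      using eventually_ge_at_top[of "1::nat"]
    proof eventually_elim
      case (elim n)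
      then have "f n / real n - c = (f n - c * real n) / real n" by (simp add: field_simps)
      with assms[of n] elim show ?case by (simp add: divide_right_mono)
    qed
  qed
  then show ?thesis by (simp add: LIM_zero_iff)
qed

section \<open>Independence and integration\<close>

lemma (in prob_space) integrable_bounded:
  fixes f :: "'a \<Rightarrow> real"
  assumes "f \<in> borel_measurable M" "\<And>w. w \<in> space M \<Longrightarrow> \<bar>f w\<bar> \<le> B"
  shows "integrable M f"
  by (rule integrable_const_bound[where B=B]) (use assms in \<open>auto intro!: AE_I2\<close>)

lemma (in prob_space) abs_expectation_le:
  fixes f :: "'a \<Rightarrow> real"
  assumes "f \<in> borel_measurable M" "\<And>w. w \<in> space M \<Longrightarrow> \<bar>f w\<bar> \<le> B"
  shows "\<bar>expectation f\<bar> \<le> B"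
proof -
  have "integrable M (\<lambda>w. \<bar>f w\<bar>)"
    using assms by (intro integrable_bounded) auto
  then have "expectation (\<lambda>w. \<bar>f w\<bar>) \<le> B"
    using assms by (intro integral_le_const) auto
  then show ?thesis using integral_abs_bound[of M f] by linarith
qed

lemma (in prob_space) prob_indep_set_vimage:
  assumes "indep_set (sets (vimage_algebra (space M) X S)) (sets (vimage_algebra (space M) Y T))"
    and "A \<in> sets S" "B \<in> sets T"
  shows "prob {w \<in> space M. X w \<in> A \<and> Y w \<in> B} = prob {w \<in> space M. X w \<in> A} * prob {w \<in> space M. Y w \<in> B}"
proof -
  have "prob ((X -` A \<inter> space M) \<inter> (Y -` B \<inter> space M)) = prob (X -` A \<inter> space M) * prob (Y -` B \<inter> space M)"
    using assms by (intro indep_setD) (auto intro: in_vimage_algebra)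
  moreover have "(X -` A \<inter> space M) \<inter> (Y -` B \<inter> space M) = {w \<in> space M. X w \<in> A \<and> Y w \<in> B}" by auto
  ultimately show ?thesis by (simp add: vimage_def Int_def conj_commute)
qed

lemma (in prob_space) pair_measure_distr_indep:
  assumes X[measurable]: "X \<in> measurable M S" and Y[measurable]: "Y \<in> measurable M T"
    and XY: "indep_set (sets (vimage_algebra (space M) X S)) (sets (vimage_algebra (space M) Y T))"
  shows "distr M S X \<Otimes>\<^sub>M distr M T Y = distr M (S \<Otimes>\<^sub>M T) (\<lambda>w. (X w, Y w))"
proof (rule pair_measure_eqI)
  interpret PX: prob_space "distr M S X" by (rule prob_space_distr) simp
  interpret PY: prob_space "distr M T Y" by (rule prob_space_distr) simp
  show "sigma_finite_measure (distr M S X)" "sigma_finite_measure (distr M T Y)" ..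
next
  fix A B assume "A \<in> sets (distr M S X)" "B \<in> sets (distr M T Y)"
  then have A: "A \<in> sets S" and B: "B \<in> sets T" by auto
  have "emeasure (distr M (S \<Otimes>\<^sub>M T) (\<lambda>w. (X w, Y w))) (A \<times> B) = prob {w \<in> space M. X w \<in> A \<and> Y w \<in> B}"
    using A B by (subst emeasure_distr) (auto simp: emeasure_eq_measure intro!: arg_cong[where f=prob])
  also have "\<dots> = prob {w \<in> space M. X w \<in> A} * prob {w \<in> space M. Y w \<in> B}"
    by (simp add: prob_indep_set_vimage[OF XY A B])
  also have "\<dots> = emeasure (distr M S X) A * emeasure (distr M T Y) B"
    using A B by (simp add: emeasure_distr emeasure_eq_measure ennreal_mult vimage_def Int_def conj_commute)
  finally show "emeasure (distr M S X) A * emeasure (distr M T Y) B = emeasure (distr M (S \<Otimes>\<^sub>M T) (\<lambda>w. (X w, Y w))) (A \<times> B)"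
    by simp
qed simp

lemma (in prob_space) expectation_indep_integral_snd:
  fixes F :: "'b \<times> 'c \<Rightarrow> real"
  assumes X[measurable]: "X \<in> measurable M S" and Y[measurable]: "Y \<in> measurable M T"
    and XY: "indep_set (sets (vimage_algebra (space M) X S)) (sets (vimage_algebra (space M) Y T))"
    and F[measurable]: "F \<in> borel_measurable (S \<Otimes>\<^sub>M T)" and Fb: "\<And>z. \<bar>F z\<bar> \<le> B"
  shows "expectation (\<lambda>w. F (X w, Y w)) = expectation (\<lambda>w. \<integral>y. F (X w, y) \<partial>distr M T Y)"
proof -
  interpret PX: prob_space "distr M S X" by (rule prob_space_distr) simp
  interpret PY: prob_space "distr M T Y" by (rule prob_space_distr) simp
  interpret P: pair_prob_space "distr M S X" "distr M T Y" ..
  have Fm: "F \<in> borel_measurable (distr M S X \<Otimes>\<^sub>M distr M T Y)" by simp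
  have "expectation (\<lambda>w. F (X w, Y w)) = integral\<^sup>L (distr M (S \<Otimes>\<^sub>M T) (\<lambda>w. (X w, Y w))) F"
    by (rule integral_distr[symmetric]) simp_all
  also have "\<dots> = integral\<^sup>L (distr M S X \<Otimes>\<^sub>M distr M T Y) F"
    by (simp add: pair_measure_distr_indep[OF X Y XY])
  also have "\<dots> = (\<integral>x. (\<integral>y. F (x, y) \<partial>distr M T Y) \<partial>distr M S X)"
    by (rule P.integral_fst'[symmetric], rule P.integrable_const_bound[where B=B]) (use Fb Fm in auto)
  also have "\<dots> = expectation (\<lambda>w. \<integral>y. F (X w, y) \<partial>distr M T Y)"
    by (rule integral_distr) (use PY.borel_measurable_lebesgue_integral Fm in simp_all)
  finally show ?thesis .
qed

lemma sets_vimage_algebra_compose_subset: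
  assumes X: "X \<in> \<Omega> \<rightarrow> space S" and f: "f \<in> measurable S S'"
  shows "sets (vimage_algebra \<Omega> (\<lambda>w. f (X w)) S') \<subseteq> sets (vimage_algebra \<Omega> X S)"
proof
  have fX: "(\<lambda>w. f (X w)) \<in> \<Omega> \<rightarrow> space S'"
    using X measurable_space[OF f] by auto
  fix E assume "E \<in> sets (vimage_algebra \<Omega> (\<lambda>w. f (X w)) S')"
  then obtain A where A: "A \<in> sets S'" and E: "E = (\<lambda>w. f (X w)) -` A \<inter> \<Omega>"
    unfolding sets_vimage_algebra2[OF fX] by blast
  have "E = X -` (f -` A \<inter> space S) \<inter> \<Omega>"
    using X unfolding E by auto
  moreover have "X -` (f -` A \<inter> space S) \<inter> \<Omega> \<in> sets (vimage_algebra \<Omega> X S)"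
    by (rule in_vimage_algebra[OF measurable_sets[OF f A]])
  ultimately show "E \<in> sets (vimage_algebra \<Omega> X S)" by (simp only:)
qed

lemma sets_vimage_algebra_subset_Pair:
  assumes "f \<in> X \<rightarrow> space MA" "g \<in> X \<rightarrow> space MB"
  shows "sets (vimage_algebra X f MA) \<subseteq> sets (vimage_algebra X (\<lambda>x. (f x, g x)) (MA \<Otimes>\<^sub>M MB))"
  using sets_vimage_algebra_compose_subset[of "\<lambda>x. (f x, g x)" X "MA \<Otimes>\<^sub>M MB" fst MA] assms measurable_fst
  by (simp add: space_pair_measure Pi_iff)

lemma sets_vimage_algebra_Pair_subset_sigma:
  assumes X: "X \<in> \<Omega> \<rightarrow> space MX" and Y: "Y \<in> \<Omega> \<rightarrow> space MY"
  shows "sets (vimage_algebra \<Omega> (\<lambda>w. (X w, Y w)) (MX \<Otimes>\<^sub>M MY))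
    \<subseteq> sigma_sets \<Omega> {X -` A \<inter> \<Omega> \<inter> (Y -` B \<inter> \<Omega>) | A B. A \<in> sets MX \<and> B \<in> sets MY}"
proof -
  let ?W = "\<lambda>w. (X w, Y w)"
  have W: "?W \<in> \<Omega> \<rightarrow> space MX \<times> space MY"
    using X Y by auto
  have "sets (vimage_algebra \<Omega> ?W (MX \<Otimes>\<^sub>M MY)) = {?W -` E \<inter> \<Omega> | E. E \<in> sets (MX \<Otimes>\<^sub>M MY)}"
    using W by (intro sets_vimage_algebra2) (simp add: space_pair_measure)
  also have "\<dots> = sigma_sets \<Omega> {?W -` E \<inter> \<Omega> | E. E \<in> {a \<times> b | a b. a \<in> sets MX \<and> b \<in> sets MY}}"
    unfolding sets_pair_measure by (rule sigma_sets_vimage_commute[OF W])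
  also have "\<dots> \<subseteq> sigma_sets \<Omega> {X -` A \<inter> \<Omega> \<inter> (Y -` B \<inter> \<Omega>) | A B. A \<in> sets MX \<and> B \<in> sets MY}"
    by (rule sigma_sets_mono') auto
  finally show ?thesis .
qed

lemma Int_stable_vimage: "Int_stable {f -` A \<inter> \<Omega> | A. A \<in> sets M}"
proof (rule Int_stableI)
  fix a a' assume "a \<in> {f -` A \<inter> \<Omega> | A. A \<in> sets M}" "a' \<in> {f -` A \<inter> \<Omega> | A. A \<in> sets M}"
  then obtain A A' where "A \<in> sets M" "A' \<in> sets M" "a = f -` A \<inter> \<Omega>" "a' = f -` A' \<inter> \<Omega>"
    by blast
  then show "a \<inter> a' \<in> {f -` A \<inter> \<Omega> | A. A \<in> sets M}"
    by (intro CollectI exI[of _ "A \<inter> A'"]) auto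
qed

lemma Int_stable_vimage_rectangles:
  "Int_stable {X -` A \<inter> \<Omega> \<inter> (Y -` B \<inter> \<Omega>) | A B. A \<in> sets MX \<and> B \<in> sets MY}"
proof (rule Int_stableI)
  fix a a' assume "a \<in> {X -` A \<inter> \<Omega> \<inter> (Y -` B \<inter> \<Omega>) | A B. A \<in> sets MX \<and> B \<in> sets MY}"
    "a' \<in> {X -` A \<inter> \<Omega> \<inter> (Y -` B \<inter> \<Omega>) | A B. A \<in> sets MX \<and> B \<in> sets MY}"
  then obtain A B A' B' where "A \<in> sets MX" "B \<in> sets MY" "A' \<in> sets MX" "B' \<in> sets MY"
    and "a = X -` A \<inter> \<Omega> \<inter> (Y -` B \<inter> \<Omega>)" "a' = X -` A' \<inter> \<Omega> \<inter> (Y -` B' \<inter> \<Omega>)"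
    by blast
  then show "a \<inter> a' \<in> {X -` A \<inter> \<Omega> \<inter> (Y -` B \<inter> \<Omega>) | A B. A \<in> sets MX \<and> B \<in> sets MY}"
    by (intro CollectI exI[of _ "A \<inter> A'"] exI[of _ "B \<inter> B'"]) auto
qed

lemma (in prob_space) indep_set_vimage_compose:
  assumes XY: "indep_set (sets (vimage_algebra (space M) X S)) (sets (vimage_algebra (space M) Y T))"
    and X: "X \<in> measurable M S" and Y: "Y \<in> measurable M T"
    and f: "f \<in> measurable S S'" and g: "g \<in> measurable T T'"
  shows "indep_set (sets (vimage_algebra (space M) (\<lambda>w. f (X w)) S'))
                   (sets (vimage_algebra (space M) (\<lambda>w. g (Y w)) T'))"
proof -
  have "X \<in> space M \<rightarrow> space S" "Y \<in> space M \<rightarrow> space T"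
    using measurable_space[OF X] measurable_space[OF Y] by blast+
  from sets_vimage_algebra_compose_subset[OF this(1) f] sets_vimage_algebra_compose_subset[OF this(2) g]
  show ?thesis
    using XY unfolding indep_set_def by (elim indep_sets_mono_sets) (auto split: bool.split)
qed

lemma (in prob_space) prob_indep_set_vimage_Pair:
  assumes L: "L \<in> measurable M ML" and g: "g \<in> measurable ML MY" and h: "h \<in> measurable ML MZ"
    and XL: "indep_set (sets (vimage_algebra (space M) X MX)) (sets (vimage_algebra (space M) L ML))"
    and YZ: "indep_set (sets (vimage_algebra (space M) (\<lambda>w. g (L w)) MY))
                       (sets (vimage_algebra (space M) (\<lambda>w. h (L w)) MZ))"
    and A: "A \<in> sets MX" and B: "B \<in> sets MY" and C: "C \<in> sets MZ"
  shows "prob (X -` A \<inter> space M \<inter> ((\<lambda>w. g (L w)) -` B \<inter> space M) \<inter> ((\<lambda>w. h (L w)) -` C \<inter> space M))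
       = prob (X -` A \<inter> space M \<inter> ((\<lambda>w. g (L w)) -` B \<inter> space M)) * prob ((\<lambda>w. h (L w)) -` C \<inter> space M)"
proof -
  let ?Y = "\<lambda>w. g (L w)" and ?Z = "\<lambda>w. h (L w)"
  have Y_L: "?Y -` B \<inter> space M = L -` (g -` B \<inter> space ML) \<inter> space M"
    using measurable_space[OF L] by auto
  have YZ_L: "?Y -` B \<inter> space M \<inter> (?Z -` C \<inter> space M) = L -` ((g -` B \<inter> space ML) \<inter> (h -` C \<inter> space ML)) \<inter> space M"
    using measurable_space[OF L] by auto
  have "prob (X -` A \<inter> space M \<inter> (?Y -` B \<inter> space M) \<inter> (?Z -` C \<inter> space M))
      = prob (X -` A \<inter> space M \<inter> (?Y -` B \<inter> space M \<inter> (?Z -` C \<inter> space M)))"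
    by (simp add: Int_assoc)
  also have "\<dots> = prob (X -` A \<inter> space M) * prob (?Y -` B \<inter> space M \<inter> (?Z -` C \<inter> space M))"
  proof -
    have "(g -` B \<inter> space ML) \<inter> (h -` C \<inter> space ML) \<in> sets ML"
      using measurable_sets[OF g B] measurable_sets[OF h C] by blast
    then show ?thesis
      unfolding YZ_L using A by (intro indep_setD[OF XL] in_vimage_algebra)
  qed
  also have "\<dots> = prob (X -` A \<inter> space M) * prob (?Y -` B \<inter> space M) * prob (?Z -` C \<inter> space M)"
    using B C by (simp add: indep_setD[OF YZ] in_vimage_algebra)
  also have "prob (X -` A \<inter> space M) * prob (?Y -` B \<inter> space M) = prob (X -` A \<inter> space M \<inter> (?Y -` B \<inter> space M))"
    unfolding Y_L using A measurable_sets[OF g B] by (intro indep_setD[OF XL, symmetric] in_vimage_algebra)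
  finally show ?thesis .
qed

lemma (in prob_space) indep_set_vimage_Pair:
  assumes X: "X \<in> measurable M MX" and L: "L \<in> measurable M ML"
    and g: "g \<in> measurable ML MY" and h: "h \<in> measurable ML MZ"
    and XL: "indep_set (sets (vimage_algebra (space M) X MX)) (sets (vimage_algebra (space M) L ML))"
    and YZ: "indep_set (sets (vimage_algebra (space M) (\<lambda>w. g (L w)) MY))
                       (sets (vimage_algebra (space M) (\<lambda>w. h (L w)) MZ))"
  shows "indep_set (sets (vimage_algebra (space M) (\<lambda>w. (X w, g (L w))) (MX \<Otimes>\<^sub>M MY)))
                   (sets (vimage_algebra (space M) (\<lambda>w. h (L w)) MZ))"
proof -
  let ?Y = "\<lambda>w. g (L w)" and ?Z = "\<lambda>w. h (L w)"
  have Y: "?Y \<in> measurable M MY" and Z: "?Z \<in> measurable M MZ"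
    using measurable_compose[OF L g] measurable_compose[OF L h] by (simp_all add: comp_def)
  define G where "G = {X -` A \<inter> space M \<inter> (?Y -` B \<inter> space M) | A B. A \<in> sets MX \<and> B \<in> sets MY}"
  define H where "H = {?Z -` C \<inter> space M | C. C \<in> sets MZ}"
  have "indep_set G H"
  proof (rule indep_setI)
    show "G \<subseteq> events" "H \<subseteq> events"
      unfolding G_def H_def using X Y Z by (auto intro!: sets.Int measurable_sets)
    show "prob (a \<inter> c) = prob a * prob c" if "a \<in> G" "c \<in> H" for a c
      using that prob_indep_set_vimage_Pair[OF L g h XL YZ] unfolding G_def H_def by blast
  qed
  moreover have "Int_stable G" "Int_stable H"
    unfolding G_def H_def by (rule Int_stable_vimage_rectangles, rule Int_stable_vimage)
  ultimately have "indep_set (sigma_sets (space M) G) (sigma_sets (space M) H)"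
    by (intro indep_set_sigma_sets)
  moreover have "sets (vimage_algebra (space M) (\<lambda>w. (X w, ?Y w)) (MX \<Otimes>\<^sub>M MY)) \<subseteq> sigma_sets (space M) G"
    unfolding G_def using measurable_space[OF X] measurable_space[OF Y]
    by (intro sets_vimage_algebra_Pair_subset_sigma) auto
  moreover have "sets (vimage_algebra (space M) ?Z MZ) = sigma_sets (space M) H"
    unfolding sets_vimage_algebra H_def ..
  ultimately show ?thesis
    unfolding indep_set_def by (elim indep_sets_mono_sets) (auto split: bool.split)
qed

lemma (in prob_space) distr_eq_density_count_space:
  fixes X :: "'a \<Rightarrow> 'b::countable"
  assumes X: "X \<in> measurable M (count_space UNIV)"
    and p: "\<And>i. prob {w \<in> space M. X w = i} = p i"
  shows "distr M (count_space UNIV) X = density (count_space UNIV) (\<lambda>i. ennreal (p i))"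
proof (rule measure_eqI_countable)
  fix i :: 'b
  have "emeasure (distr M (count_space UNIV) X) {i} = emeasure M {w \<in> space M. X w = i}"
    using X by (subst emeasure_distr) (auto intro!: arg_cong[where f="emeasure M"])
  also have "\<dots> = emeasure (density (count_space UNIV) (\<lambda>i. ennreal (p i))) {i}"
    using p by (simp add: emeasure_eq_measure emeasure_density)
  finally show "emeasure (distr M (count_space UNIV) X) {i} = emeasure (density (count_space UNIV) (\<lambda>i. ennreal (p i))) {i}" .
qed auto

lemma integral_density_count_space_nat:
  fixes p g :: "nat \<Rightarrow> real"
  assumes p: "\<And>i. 0 \<le> p i" "summable p" and g: "\<And>i. \<bar>g i\<bar> \<le> B"
  shows "(\<integral>i. g i \<partial>density (count_space UNIV) (\<lambda>i. ennreal (p i))) = (\<Sum>i. p i * g i)"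
proof -
  have "summable (\<lambda>i. norm (p i * g i))"
  proof (rule summable_comparison_test[OF _ summable_mult2[OF p(2), of B]])
    show "\<exists>N. \<forall>n\<ge>N. norm (norm (p n * g n)) \<le> p n * B"
      using p(1) g by (auto simp: abs_mult intro!: mult_left_mono)
  qed
  then have "integrable (count_space UNIV) (\<lambda>i. p i * g i)"
    by (simp add: integrable_count_space_nat_iff)
  then show ?thesis
    using p(1) by (simp add: integral_density integral_count_space_nat)
qed

lemma (in prob_space) indep_var_indep_set_vimage:
  "indep_var S X T Y \<Longrightarrow> indep_set (sets (vimage_algebra (space M) X S)) (sets (vimage_algebra (space M) Y T))"
  by (simp add: indep_var_eq sets_vimage_algebra)

lemma (in prob_space) expectation_split_index:
  fixes f :: "nat \<Rightarrow> 'a \<Rightarrow> real" and R :: "'a \<Rightarrow> nat"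
  assumes R: "\<And>w. R w \<le> k"
    and f: "\<And>j. j \<le> k \<Longrightarrow> integrable M (\<lambda>w. indicator {w \<in> space M. R w = j \<and> P w} w * f j w)"
  shows "expectation (\<lambda>w. if P w then f (R w) w else 0)
       = (\<Sum>j\<le>k. expectation (\<lambda>w. indicator {w \<in> space M. R w = j \<and> P w} w * f j w))"
proof -
  have "(\<Sum>j\<le>k. indicator {w \<in> space M. R w = j \<and> P w} w * f j w)
      = (\<Sum>j\<le>k. if R w = j then (if P w then f j w else 0) else 0)" if "w \<in> space M" for w
    using that by (intro sum.cong) (auto simp: indicator_def)
  also have "\<dots> w = (if P w then f (R w) w else 0)" for w
    using R[of w] by (simp add: sum.delta')
  finally have "expectation (\<lambda>w. if P w then f (R w) w else 0)
      = expectation (\<lambda>w. \<Sum>j\<le>k. indicator {w \<in> space M. R w = j \<and> P w} w * f j w)"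
    by (intro Bochner_Integration.integral_cong refl) (simp only:)
  also have "\<dots> = (\<Sum>j\<le>k. expectation (\<lambda>w. indicator {w \<in> space M. R w = j \<and> P w} w * f j w))"
    by (intro Bochner_Integration.integral_sum f) simp
  finally show ?thesis .
qed

section \<open>Reading counts and matches\<close>

lemma Rcnt_0 [simp]: "Rcnt C 0 w = 0"
  by (simp add: Rcnt_def)

lemma Rcnt_Suc: "Rcnt C (Suc k) w = Rcnt C k w + (if C (Suc k) w then 1 else 0)"
proof -
  have "{j \<in> {1..Suc k}. C j w} = {j \<in> {1..k}. C j w} \<union> (if C (Suc k) w then {Suc k} else {})"
    by (auto simp: le_Suc_eq)
  then show ?thesis by (simp add: Rcnt_def)
qed

lemma Rcnt_le: "Rcnt C k w \<le> k"
proof -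
  have "card {j \<in> {1..k}. C j w} \<le> card {1..k}" by (rule card_mono) auto
  then show ?thesis by (simp add: Rcnt_def)
qed

lemma Scnt_Suc: "Scnt C (Suc k) w = Scnt C k w + (if C (Suc k) w then 0 else 1)"
  using Rcnt_le[of C k w] by (simp add: Scnt_def Rcnt_Suc)

lemma Scnt_le: "Scnt C k w \<le> k"
  by (simp add: Scnt_def)

lemma Gamma_Suc: "Gamma g L (Suc m) w = Gamma g L m w + g (L (Suc m) w)"
  by (simp add: Gamma_def)

definition coincidences :: "(nat \<Rightarrow> 'a \<Rightarrow> nat) \<Rightarrow> (nat \<Rightarrow> 'a \<Rightarrow> nat) \<Rightarrow> nat \<Rightarrow> nat \<Rightarrow> 'a \<Rightarrow> real" where
  "coincidences LR LS a b w = (\<Sum>p\<in>{1..a}. \<Sum>q\<in>{1..b}. if LR p w = LS q w then 1 else 0)"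

lemma coincidences_Suc_left:
  "coincidences LR LS (Suc a) b w = coincidences LR LS a b w + Gamma (\<lambda>y. if y = LR (Suc a) w then 1 else 0) LS b w"
proof -
  have "coincidences LR LS (Suc a) b w = coincidences LR LS a b w + (\<Sum>q=1..b. if LR (Suc a) w = LS q w then 1 else 0)"
    by (simp add: coincidences_def)
  also have "(\<Sum>q=1..b. if LR (Suc a) w = LS q w then 1 else 0) = Gamma (\<lambda>y. if y = LR (Suc a) w then 1 else 0) LS b w"
    unfolding Gamma_def by (intro sum.cong) auto
  finally show ?thesis .
qed

lemma coincidences_Suc_right:
  "coincidences LR LS a (Suc b) w = coincidences LR LS a b w + Gamma (\<lambda>y. if y = LS (Suc b) w then 1 else 0) LR a w"
  by (simp add: coincidences_def Gamma_def sum.distrib)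

lemma coincidences_le: "coincidences LR LS a b w \<le> a * b"
proof -
  have "coincidences LR LS a b w \<le> (\<Sum>p\<in>{1..a}. \<Sum>q\<in>{1..b}. 1)"
    unfolding coincidences_def by (intro sum_mono) auto
  then show ?thesis by simp
qed

lemma Ncnt_eq_sum: "real (Ncnt L m i w) = (\<Sum>p\<in>{1..m}. if L p w = i then 1 else 0)"
  by (simp add: Ncnt_def sum.inter_filter[symmetric])

lemma matches_eq_coincidences: "real (matches LR LS C n w) = coincidences LR LS (Rcnt C n w) (Scnt C n w) w"
proof -
  define a b where "a = Rcnt C n w" and "b = Scnt C n w"
  have labels: "{i. 0 < Ncnt LR a i w} = (\<lambda>p. LR p w) ` {1..a}"
    by (auto simp: Ncnt_def card_gt_0_iff)
  have "coincidences LR LS a b w = (\<Sum>p\<in>{1..a}. real (Ncnt LS b (LR p w) w))"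
    unfolding coincidences_def by (intro sum.cong refl) (auto simp: Ncnt_eq_sum intro!: sum.cong)
  also have "\<dots> = (\<Sum>i\<in>(\<lambda>p. LR p w) ` {1..a}. \<Sum>p\<in>{p\<in>{1..a}. LR p w = i}. real (Ncnt LS b (LR p w) w))"
    by (rule sum.image_gen) simp
  also have "\<dots> = (\<Sum>i\<in>(\<lambda>p. LR p w) ` {1..a}. real (Ncnt LR a i w) * real (Ncnt LS b i w))"
    by (intro sum.cong refl) (simp add: Ncnt_def)
  finally show ?thesis
    unfolding matches_def a_def[symmetric] b_def[symmetric] labels by simp
qed

text \<open>Unread slots (\<open>None\<close>) of a truncated label sequence contribute nothing, so \<open>tally k\<close>
  evaluates \<open>Gamma\<close> on any truncation to at most \<open>k\<close> labels without knowing its length.\<close>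

definition tally :: "nat \<Rightarrow> (nat \<Rightarrow> real) \<Rightarrow> (nat \<Rightarrow> nat option) \<Rightarrow> real" where
  "tally k g f = (\<Sum>q=1..k. case f q of None \<Rightarrow> 0 | Some x \<Rightarrow> g x)"

lemma tally_trunc:
  assumes "m \<le> k"
  shows "tally k g (trunc L m w) = Gamma g L m w"
proof -
  have "tally k g (trunc L m w) = (\<Sum>q\<in>{1..k}. if q \<in> {1..m} then g (L q w) else 0)"
    unfolding tally_def trunc_def by (intro sum.cong) auto
  also have "\<dots> = (\<Sum>q\<in>{1..k} \<inter> {1..m}. g (L q w))"
    by (rule sum.inter_restrict[symmetric]) simp
  also have "{1..k} \<inter> {1..m} = {1..m}"
    using assms by auto
  finally show ?thesis by (simp add: Gamma_def)
qed

lemma tally_bounds: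
  assumes "\<And>x. 0 \<le> g x" "\<And>x. g x \<le> 1"
  shows "0 \<le> tally k g f" "tally k g f \<le> k"
proof -
  show "0 \<le> tally k g f"
    unfolding tally_def by (intro sum_nonneg) (auto simp: assms split: option.split)
  have "tally k g f \<le> (\<Sum>q=1..k. 1)"
    unfolding tally_def by (intro sum_mono) (auto simp: assms split: option.split)
  then show "tally k g f \<le> k" by simp
qed

lemma measurable_tally [measurable]: "tally k g \<in> borel_measurable (PiM UNIV (\<lambda>_. count_space UNIV))"
  unfolding tally_def
  by (intro borel_measurable_sum measurable_compose[OF measurable_component_singleton]) auto

lemma sum_Suc_div_2: "4 * (\<Sum>k<n. Suc k div 2) + n mod 2 = n * (n::nat)"
proof (induction n)
  case (Suc n)
  have "4 * (Suc n div 2) + Suc n mod 2 = 2 * n + 1 + n mod 2"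
    by (cases "even n") (auto elim!: evenE oddE)
  with Suc show ?case by simp
qed simp

lemma alternating_counts:
  assumes alt: "\<And>m. Rcnt C (2 * m) w = m"
  shows "(C (Suc k) w \<longrightarrow> Scnt C k w = Suc k div 2) \<and> (\<not> C (Suc k) w \<longrightarrow> Rcnt C k w = Suc k div 2)"
proof (cases "even k")
  case True
  then obtain m where k: "k = 2 * m" by (auto elim: evenE)
  then show ?thesis using alt[of m] by (simp add: Scnt_def)
next
  case False
  then obtain m where k: "k = 2 * m + 1" by (auto elim: oddE)
  then have "Rcnt C (Suc k) w = Suc m" using alt[of "Suc m"] by simp
  then show ?thesis using k by (simp add: Rcnt_Suc Scnt_def split: if_splits)
qed

section \<open>The label streams\<close>

locale label_streams = prob_space M for M :: "'a measure" +
  fixes N :: "'u measure" and U :: "'a \<Rightarrow> 'u"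
    and r s :: "nat \<Rightarrow> real"
    and LR LS :: "nat \<Rightarrow> 'a \<Rightarrow> nat"
  assumes r_nonneg: "\<forall>i. 0 \<le> r i" and r_sums: "r sums 1"
    and s_nonneg: "\<forall>i. 0 \<le> s i" and s_sums: "s sums 1"
    and U_meas: "U \<in> measurable M N"
    and LR_meas: "\<forall>j. LR j \<in> measurable M (count_space UNIV)"
    and LS_meas: "\<forall>j. LS j \<in> measurable M (count_space UNIV)"
    and LR_dist: "\<forall>j\<ge>1. \<forall>i. prob {w \<in> space M. LR j w = i} = r i"
    and LS_dist: "\<forall>j\<ge>1. \<forall>i. prob {w \<in> space M. LS j w = i} = s i"
    and labels_indep: "indep_vars (\<lambda>_. count_space UNIV)
        (\<lambda>k w. case k of Inl j \<Rightarrow> LR j w | Inr j \<Rightarrow> LS j w) ({1..} <+> {1..})"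
    and U_indep: "indep_set (sets (vimage_algebra (space M) U N))
        (sets (vimage_algebra (space M)
           (\<lambda>w k. case k of Inl j \<Rightarrow> LR (Suc j) w | Inr j \<Rightarrow> LS (Suc j) w)
           (PiM UNIV (\<lambda>_::nat + nat. count_space UNIV))))"
begin

lemma measurable_U [measurable]: "U \<in> measurable M N"
  using U_meas .

lemma measurable_LR [measurable]: "LR j \<in> measurable M (count_space UNIV)"
  using LR_meas by blast

lemma measurable_LS [measurable]: "LS j \<in> measurable M (count_space UNIV)"
  using LS_meas by blast

lemma r_bounds: "0 \<le> r i" "r i \<le> 1"
  using r_nonneg r_sums sums_one_le_one by auto

lemma s_bounds: "0 \<le> s i" "s i \<le> 1"
  using s_nonneg s_sums sums_one_le_one by auto

definition label :: "'a \<Rightarrow> nat + nat \<Rightarrow> nat" where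
  "label w k = (case k of Inl j \<Rightarrow> LR j w | Inr j \<Rightarrow> LS j w)"

lemma measurable_label [measurable]: "(\<lambda>w. label w k) \<in> measurable M (count_space UNIV)"
  by (cases k) (simp_all add: label_def)

definition read_labels :: "nat \<Rightarrow> nat \<Rightarrow> (nat + nat) set" where
  "read_labels j b = Inl ` {1..j} \<union> Inr ` {1..b}"

abbreviation trunc_space :: "(nat \<Rightarrow> nat option) measure" where
  "trunc_space \<equiv> PiM UNIV (\<lambda>_. count_space UNIV)"

text \<open>\<open>obs j b\<close> is everything known after reading \<open>j\<close> records of \<open>R\<close> and \<open>b\<close> of \<open>S\<close>:
  \<open>info_alg M U N LR LS C n\<close> is generated by \<open>obs (Rcnt C n w) (Scnt C n w) w\<close>.\<close>

definition obs_space :: "('u \<times> (nat \<Rightarrow> nat option) \<times> (nat \<Rightarrow> nat option)) measure" where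
  "obs_space = N \<Otimes>\<^sub>M (trunc_space \<Otimes>\<^sub>M trunc_space)"

definition obs :: "nat \<Rightarrow> nat \<Rightarrow> 'a \<Rightarrow> 'u \<times> (nat \<Rightarrow> nat option) \<times> (nat \<Rightarrow> nat option)" where
  "obs j b w = (U w, trunc LR j w, trunc LS b w)"

definition obs_of :: "nat \<Rightarrow> nat \<Rightarrow> 'u \<times> (nat + nat \<Rightarrow> nat) \<Rightarrow> 'u \<times> (nat \<Rightarrow> nat option) \<times> (nat \<Rightarrow> nat option)" where
  "obs_of j b = (\<lambda>(u, f). (u, \<lambda>i. if 1 \<le> i \<and> i \<le> j then Some (f (Inl i)) else None,
                              \<lambda>i. if 1 \<le> i \<and> i \<le> b then Some (f (Inr i)) else None))"

lemma measurable_into_trunc_space: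
  assumes "\<And>i. (\<lambda>x. g x i) \<in> measurable A (count_space UNIV)"
  shows "g \<in> measurable A trunc_space"
proof -
  have "(\<lambda>x. \<lambda>i\<in>UNIV. g x i) \<in> measurable A trunc_space"
    by (rule measurable_restrict) (use assms in auto)
  moreover have "(\<lambda>x. \<lambda>i\<in>UNIV. g x i) = g" by (auto simp: restrict_def)
  ultimately show ?thesis by simp
qed

lemma measurable_obs_of:
  "obs_of j b \<in> measurable (N \<Otimes>\<^sub>M PiM (read_labels j b) (\<lambda>_. count_space UNIV)) obs_space"
proof -
  let ?D = "N \<Otimes>\<^sub>M PiM (read_labels j b) (\<lambda>_. count_space UNIV)"
  have entry: "(\<lambda>x. if 1 \<le> i \<and> i \<le> m then Some (snd x (inj i)) else None) \<in> measurable ?D (count_space UNIV)"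
    if "\<And>i. 1 \<le> i \<Longrightarrow> i \<le> m \<Longrightarrow> inj i \<in> read_labels j b" for m i and inj :: "nat \<Rightarrow> nat + nat"
  proof (cases "1 \<le> i \<and> i \<le> m")
    case True
    then have "(\<lambda>x. snd x (inj i)) \<in> measurable ?D (count_space UNIV)"
      using that by (intro measurable_compose[OF measurable_snd measurable_component_singleton]) auto
    then have "(\<lambda>x. Some (snd x (inj i))) \<in> measurable ?D (count_space UNIV)"
      by (rule measurable_compose) (rule measurable_count_space)
    with True show ?thesis by simp
  qed (cases "Suc 0 \<le> i"; simp)
  show ?thesis
    unfolding obs_space_def obs_of_def split_beta'
    by (intro measurable_Pair measurable_fst'' measurable_ident_sets measurable_into_trunc_space entry)
      (auto simp: read_labels_def)
qed

lemma obs_eq_obs_of: "obs j b w = obs_of j b (U w, restrict (label w) (read_labels j b))"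
  by (auto simp: obs_def obs_of_def trunc_def read_labels_def label_def fun_eq_iff)

lemma measurable_obs [measurable]: "obs j b \<in> measurable M obs_space"
proof -
  have "(\<lambda>w. (U w, restrict (label w) (read_labels j b))) \<in> measurable M (N \<Otimes>\<^sub>M PiM (read_labels j b) (\<lambda>_. count_space UNIV))"
    by (intro measurable_Pair measurable_U measurable_restrict measurable_label)
  from measurable_comp[OF this measurable_obs_of] show ?thesis
    by (simp add: comp_def obs_eq_obs_of[abs_def])
qed

definition shifted_labels :: "'a \<Rightarrow> nat + nat \<Rightarrow> nat" where
  "shifted_labels w k = label w (map_sum Suc Suc k)"

lemma measurable_shifted_labels: "shifted_labels \<in> measurable M (PiM UNIV (\<lambda>_. count_space UNIV))"
  unfolding shifted_labels_def by (intro measurable_PiM_single' measurable_label) auto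

lemma U_indep_shifted_labels:
  "indep_set (sets (vimage_algebra (space M) U N))
             (sets (vimage_algebra (space M) shifted_labels (PiM UNIV (\<lambda>_. count_space UNIV))))"
proof -
  have "(\<lambda>w k. case k of Inl j \<Rightarrow> LR (Suc j) w | Inr j \<Rightarrow> LS (Suc j) w) = shifted_labels"
    by (auto simp: fun_eq_iff shifted_labels_def label_def split: sum.split)
  with U_indep show ?thesis by simp
qed

lemma label_eq_shifted_labels:
  "k \<in> {1..} <+> {1..} \<Longrightarrow> label w k = shifted_labels w (map_sum (\<lambda>i. i - 1) (\<lambda>i. i - 1) k)"
  by (auto simp: shifted_labels_def)

lemma read_labels_indep_label:
  assumes k: "k \<in> {1..} <+> {1..}" "k \<notin> read_labels j b"
  shows "indep_set (sets (vimage_algebra (space M) (\<lambda>w. restrict (label w) (read_labels j b))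
                                          (PiM (read_labels j b) (\<lambda>_. count_space UNIV))))
                   (sets (vimage_algebra (space M) (\<lambda>w. label w k) (count_space UNIV)))"
proof -
  have K: "read_labels j b \<subseteq> {1..} <+> {1..}"
    by (auto simp: read_labels_def)
  have "indep_var (PiM (read_labels j b) (\<lambda>_. count_space UNIV)) (\<lambda>w. restrict (label w) (read_labels j b))
      (PiM {k} (\<lambda>_. count_space UNIV)) (\<lambda>w. restrict (label w) {k})"
    using indep_var_restrict[OF labels_indep _ K, of "{k}"] k by (simp add: label_def[abs_def])
  from indep_set_vimage_compose[OF indep_var_indep_set_vimage[OF this] _ _
      measurable_ident measurable_component_singleton[of k "{k}"]]
  show ?thesis by simp
qed

lemma obs_indep_label:
  assumes k: "k \<in> {1..} <+> {1..}" "k \<notin> read_labels j b"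
  shows "indep_set (sets (vimage_algebra (space M) (obs j b) obs_space))
                   (sets (vimage_algebra (space M) (\<lambda>w. label w k) (count_space UNIV)))"
proof -
  let ?K = "read_labels j b"
  define unshift where "unshift = map_sum (\<lambda>i::nat. i - 1) (\<lambda>i::nat. i - 1)"
  have read: "restrict (\<lambda>k'. shifted_labels w (unshift k')) ?K = restrict (label w) ?K" for w
  proof -
    have "shifted_labels w (unshift k') = label w k'" if "k' \<in> ?K" for k'
    proof -
      have "k' \<in> {1..} <+> {1..}" using that by (auto simp: read_labels_def)
      then show ?thesis by (simp add: label_eq_shifted_labels unshift_def)
    qed
    then show ?thesis by (auto simp: fun_eq_iff restrict_def)
  qed
  have unread: "shifted_labels w (unshift k) = label w k" for w
    using k by (simp add: label_eq_shifted_labels unshift_def)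
  have "indep_set (sets (vimage_algebra (space M) (\<lambda>w. (U w, restrict (label w) ?K)) (N \<Otimes>\<^sub>M PiM ?K (\<lambda>_. count_space UNIV))))
                  (sets (vimage_algebra (space M) (\<lambda>w. label w k) (count_space UNIV)))"
    using indep_set_vimage_Pair[OF measurable_U measurable_shifted_labels,
        of "\<lambda>f. restrict (\<lambda>k'. f (unshift k')) ?K" "PiM ?K (\<lambda>_. count_space UNIV)" "\<lambda>f. f (unshift k)" "count_space UNIV"]
      U_indep_shifted_labels read_labels_indep_label[OF k]
    by (simp add: read unread)
  from indep_set_vimage_compose[OF this _ _ measurable_obs_of measurable_ident]
  show ?thesis by (simp add: obs_eq_obs_of[abs_def])
qed

definition lawR :: "nat measure" where
  "lawR = density (count_space UNIV) (\<lambda>i. ennreal (r i))"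

definition lawS :: "nat measure" where
  "lawS = density (count_space UNIV) (\<lambda>i. ennreal (s i))"

lemma distr_LR: "j \<ge> 1 \<Longrightarrow> distr M (count_space UNIV) (LR j) = lawR"
  unfolding lawR_def using LR_dist by (intro distr_eq_density_count_space) auto

lemma distr_LS: "j \<ge> 1 \<Longrightarrow> distr M (count_space UNIV) (LS j) = lawS"
  unfolding lawS_def using LS_dist by (intro distr_eq_density_count_space) auto

lemma prob_space_lawR: "prob_space lawR"
  using prob_space_distr[OF measurable_LR[of 1]] by (simp add: distr_LR)

lemma prob_space_lawS: "prob_space lawS"
  using prob_space_distr[OF measurable_LS[of 1]] by (simp add: distr_LS)

lemma sets_lawR [measurable_cong]: "sets lawR = sets (count_space UNIV)"
  by (simp add: lawR_def)

lemma sets_lawS [measurable_cong]: "sets lawS = sets (count_space UNIV)"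
  by (simp add: lawS_def)

lemma integral_lawR: "(\<And>i. \<bar>g i\<bar> \<le> B) \<Longrightarrow> (\<integral>i. g i \<partial>lawR) = (\<Sum>i. r i * g i)"
  unfolding lawR_def using r_bounds r_sums by (intro integral_density_count_space_nat) (auto simp: sums_iff)

lemma integral_lawS: "(\<And>i. \<bar>g i\<bar> \<le> B) \<Longrightarrow> (\<integral>i. g i \<partial>lawS) = (\<Sum>i. s i * g i)"
  unfolding lawS_def using s_bounds s_sums by (intro integral_density_count_space_nat) (auto simp: sums_iff)

definition mu :: real where
  "mu = (\<Sum>i. r i * s i)"

definition m2R :: real where
  "m2R = (\<integral>i. (s i)\<^sup>2 \<partial>lawR)"

definition m2S :: real where
  "m2S = (\<integral>i. (r i)\<^sup>2 \<partial>lawS)"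

lemma integral_lawR_s: "(\<integral>i. s i \<partial>lawR) = mu"
  unfolding mu_def using s_bounds by (intro integral_lawR[where B=1]) auto

lemma integral_lawS_r: "(\<integral>i. r i \<partial>lawS) = mu"
  unfolding mu_def using r_bounds by (subst integral_lawS[where B=1]) (auto simp: mult.commute)

lemma integral_lawR_affine_sq: "(\<integral>i. a * s i + (s i)\<^sup>2 \<partial>lawR) = a * mu + m2R"
proof -
  interpret lawR: prob_space lawR by (rule prob_space_lawR)
  have "integrable lawR s" "integrable lawR (\<lambda>i. (s i)\<^sup>2)"
    using s_bounds by (auto intro!: lawR.integrable_bounded[where B=1] simp: abs_le_iff power_le_one)
  then show ?thesis by (simp add: integral_lawR_s m2R_def)
qed

lemma integral_lawS_affine_sq: "(\<integral>i. a * r i + (r i)\<^sup>2 \<partial>lawS) = a * mu + m2S"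
proof -
  interpret lawS: prob_space lawS by (rule prob_space_lawS)
  have "integrable lawS r" "integrable lawS (\<lambda>i. (r i)\<^sup>2)"
    using r_bounds by (auto intro!: lawS.integrable_bounded[where B=1] simp: abs_le_iff power_le_one)
  then show ?thesis by (simp add: integral_lawS_r m2S_def)
qed

lemma variance_LR: "variance (\<lambda>w. s (LR 1 w)) = m2R - mu\<^sup>2"
proof -
  have i: "integrable M (\<lambda>w. s (LR 1 w))" "integrable M (\<lambda>w. (s (LR 1 w))\<^sup>2)"
    using s_bounds by (auto intro!: integrable_bounded[where B=1] simp: abs_le_iff power_le_one)
  have law: "expectation (\<lambda>w. g (LR 1 w)) = (\<integral>i. g i \<partial>lawR)" for g :: "nat \<Rightarrow> real"
    using integral_distr[of "LR 1" M "count_space UNIV" g] by (simp add: distr_LR)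
  show ?thesis
    using law[of s] law[of "\<lambda>i. (s i)\<^sup>2"] unfolding variance_eq[OF i]
    by (simp add: integral_lawR_s m2R_def)
qed

lemma variance_LS: "variance (\<lambda>w. r (LS 1 w)) = m2S - mu\<^sup>2"
proof -
  have i: "integrable M (\<lambda>w. r (LS 1 w))" "integrable M (\<lambda>w. (r (LS 1 w))\<^sup>2)"
    using r_bounds by (auto intro!: integrable_bounded[where B=1] simp: abs_le_iff power_le_one)
  have law: "expectation (\<lambda>w. g (LS 1 w)) = (\<integral>i. g i \<partial>lawS)" for g :: "nat \<Rightarrow> real"
    using integral_distr[of "LS 1" M "count_space UNIV" g] by (simp add: distr_LS)
  show ?thesis
    using law[of r] law[of "\<lambda>i. (r i)\<^sup>2"] unfolding variance_eq[OF i]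
    by (simp add: integral_lawS_r m2S_def)
qed

definition observable :: "nat \<Rightarrow> nat \<Rightarrow> 'a set \<Rightarrow> bool" where
  "observable j b E \<longleftrightarrow> E \<in> sets (vimage_algebra (space M) (obs j b) obs_space)"

lemma observable_iff_vimage: "observable j b E \<longleftrightarrow> (\<exists>A\<in>sets obs_space. E = obs j b -` A \<inter> space M)"
proof -
  have "obs j b \<in> space M \<rightarrow> space obs_space"
    using measurable_space[OF measurable_obs] by blast
  from sets_vimage_algebra2[OF this] show ?thesis
    unfolding observable_def by blast
qed

lemma observable_sets: "observable j b E \<Longrightarrow> E \<in> sets M"
  using measurable_sets[OF measurable_obs] by (auto simp: observable_iff_vimage)

lemma observable_Int: "observable j b E \<Longrightarrow> observable j b F \<Longrightarrow> observable j b (E \<inter> F)"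
  by (simp add: observable_def sets.Int)

lemma observable_Diff: "observable j b E \<Longrightarrow> observable j b F \<Longrightarrow> observable j b (E - F)"
  by (simp add: observable_def sets.Diff)

lemma observable_Un: "observable j b E \<Longrightarrow> observable j b F \<Longrightarrow> observable j b (E \<union> F)"
  by (simp add: observable_def sets.Un)

lemma observable_mono:
  assumes "j \<le> j'" "b \<le> b'" "observable j b E"
  shows "observable j' b' E"
proof -
  define forget where "forget v = (fst v, \<lambda>i. if i \<le> j then fst (snd v) i else None,
      \<lambda>i. if i \<le> b then snd (snd v) i else None)" for v :: "'u \<times> (nat \<Rightarrow> nat option) \<times> (nat \<Rightarrow> nat option)"
  have "forget \<in> measurable obs_space obs_space"
    unfolding forget_def obs_space_def by (intro measurable_Pair measurable_into_trunc_space) auto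
  moreover have "obs j' b' \<in> space M \<rightarrow> space obs_space"
    using measurable_space[OF measurable_obs] by blast
  ultimately have "sets (vimage_algebra (space M) (\<lambda>w. forget (obs j' b' w)) obs_space)
      \<subseteq> sets (vimage_algebra (space M) (obs j' b') obs_space)"
    by (intro sets_vimage_algebra_compose_subset)
  moreover have "(\<lambda>w. forget (obs j' b' w)) = obs j b"
    using assms by (auto simp: obs_def forget_def trunc_def fun_eq_iff)
  ultimately show ?thesis
    using assms(3) unfolding observable_def by auto
qed

lemma obs_indep_LR:
  "indep_set (sets (vimage_algebra (space M) (obs j b) obs_space))
             (sets (vimage_algebra (space M) (LR (Suc j)) (count_space UNIV)))"
proof -
  have "Inl (Suc j) \<in> {1..} <+> {1..}" "Inl (Suc j) \<notin> read_labels j b"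
    by (auto simp: read_labels_def)
  from obs_indep_label[OF this] show ?thesis by (simp add: label_def[abs_def])
qed

lemma obs_indep_LS:
  "indep_set (sets (vimage_algebra (space M) (obs j b) obs_space))
             (sets (vimage_algebra (space M) (LS (Suc b)) (count_space UNIV)))"
proof -
  have "Inr (Suc b) \<in> {1..} <+> {1..}" "Inr (Suc b) \<notin> read_labels j b"
    by (auto simp: read_labels_def)
  from obs_indep_label[OF this] show ?thesis by (simp add: label_def[abs_def])
qed

lemma integrable_indicator_obs:
  fixes Y :: "'a \<Rightarrow> nat" and Phi :: "'u \<times> (nat \<Rightarrow> nat option) \<times> (nat \<Rightarrow> nat option) \<Rightarrow> nat \<Rightarrow> real"
  assumes E: "observable j b E" and Y: "Y \<in> measurable M (count_space UNIV)"
    and Phi: "(\<lambda>z. Phi (fst z) (snd z)) \<in> borel_measurable (obs_space \<Otimes>\<^sub>M count_space UNIV)"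
    and Phi_bound: "\<And>v i. \<bar>Phi v i\<bar> \<le> B"
  shows "integrable M (\<lambda>w. indicator E w * Phi (obs j b w) (Y w))"
proof (rule integrable_bounded)
  have "(\<lambda>w. Phi (obs j b w) (Y w)) \<in> borel_measurable M"
    using measurable_compose[OF measurable_Pair[OF measurable_obs Y] Phi] by simp
  then show "(\<lambda>w. indicator E w * Phi (obs j b w) (Y w)) \<in> borel_measurable M"
    using observable_sets[OF E] by measurable
  show "\<bar>indicator E w * Phi (obs j b w) (Y w)\<bar> \<le> B" for w
    using Phi_bound[of "obs j b w" "Y w"] abs_ge_zero[of "Phi (obs j b w) (Y w)"]
    by (auto simp: indicator_def)
qed

lemma expectation_fresh_on_event:
  fixes Y :: "'a \<Rightarrow> nat" and Phi :: "'u \<times> (nat \<Rightarrow> nat option) \<times> (nat \<Rightarrow> nat option) \<Rightarrow> nat \<Rightarrow> real"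
  assumes E: "observable j b E"
    and indep: "indep_set (sets (vimage_algebra (space M) (obs j b) obs_space))
                          (sets (vimage_algebra (space M) Y (count_space UNIV)))"
    and Y: "Y \<in> measurable M (count_space UNIV)"
    and Phi: "(\<lambda>z. Phi (fst z) (snd z)) \<in> borel_measurable (obs_space \<Otimes>\<^sub>M count_space UNIV)"
    and Phi_bound: "\<And>v i. \<bar>Phi v i\<bar> \<le> B"
  shows "expectation (\<lambda>w. indicator E w * Phi (obs j b w) (Y w))
       = expectation (\<lambda>w. indicator E w * (\<integral>i. Phi (obs j b w) i \<partial>distr M (count_space UNIV) Y))"
proof -
  obtain A where A: "A \<in> sets obs_space" and E_A: "E = obs j b -` A \<inter> space M"
    using E by (auto simp: observable_iff_vimage)
  define F where "F z = indicator A (fst z) * Phi (fst z) (snd z)" for z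
  have F: "F \<in> borel_measurable (obs_space \<Otimes>\<^sub>M count_space UNIV)"
    unfolding F_def using A Phi by measurable
  have F_bound: "\<bar>F z\<bar> \<le> B" for z
    using Phi_bound[of "fst z" "snd z"] abs_ge_zero[of "Phi (fst z) (snd z)"] by (auto simp: F_def indicator_def)
  have "expectation (\<lambda>w. indicator E w * Phi (obs j b w) (Y w)) = expectation (\<lambda>w. F (obs j b w, Y w))"
    by (intro Bochner_Integration.integral_cong) (auto simp: E_A F_def indicator_def)
  also have "\<dots> = expectation (\<lambda>w. \<integral>i. F (obs j b w, i) \<partial>distr M (count_space UNIV) Y)"
    by (rule expectation_indep_integral_snd[OF measurable_obs Y indep F F_bound])
  also have "\<dots> = expectation (\<lambda>w. indicator E w * (\<integral>i. Phi (obs j b w) i \<partial>distr M (count_space UNIV) Y))"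
    by (intro Bochner_Integration.integral_cong) (auto simp: E_A F_def indicator_def)
  finally show ?thesis .
qed

text \<open>On the observable event \<open>Rk = j\<close> the next label is the candidate \<open>Y j\<close>, which is independent
  of \<open>obs j (k - j)\<close>; splitting over \<open>j\<close> integrates it out.\<close>

lemma expectation_fresh_label:
  fixes Rk :: "'a \<Rightarrow> nat" and Y :: "nat \<Rightarrow> 'a \<Rightarrow> nat"
    and Phi :: "'u \<times> (nat \<Rightarrow> nat option) \<times> (nat \<Rightarrow> nat option) \<Rightarrow> nat \<Rightarrow> real"
  assumes Rk: "\<And>w. Rk w \<le> k"
    and event: "\<And>j. j \<le> k \<Longrightarrow> observable j (k - j) {w \<in> space M. Rk w = j \<and> P w}"
    and indep: "\<And>j. j \<le> k \<Longrightarrow> indep_set (sets (vimage_algebra (space M) (obs j (k - j)) obs_space))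
                                          (sets (vimage_algebra (space M) (Y j) (count_space UNIV)))"
    and Y: "\<And>j. Y j \<in> measurable M (count_space UNIV)"
    and law: "\<And>j. j \<le> k \<Longrightarrow> distr M (count_space UNIV) (Y j) = D"
    and Phi: "(\<lambda>z. Phi (fst z) (snd z)) \<in> borel_measurable (obs_space \<Otimes>\<^sub>M count_space UNIV)"
    and Phi_bound: "\<And>v i. \<bar>Phi v i\<bar> \<le> B"
  shows "expectation (\<lambda>w. if P w then Phi (obs (Rk w) (k - Rk w) w) (Y (Rk w) w) else 0)
       = expectation (\<lambda>w. if P w then (\<integral>i. Phi (obs (Rk w) (k - Rk w) w) i \<partial>D) else 0)"
proof -
  let ?E = "\<lambda>j. {w \<in> space M. Rk w = j \<and> P w}"
  interpret D: prob_space D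
    using prob_space_distr[OF Y[of 0]] law[of 0] by simp
  have sets_D: "sets D = sets (count_space UNIV)"
    using law[of 0] sets_distr[of M "count_space UNIV" "Y 0"] by simp
  have Phi_D: "(\<lambda>z. \<integral>i. Phi (fst z) i \<partial>D) \<in> borel_measurable (obs_space \<Otimes>\<^sub>M count_space UNIV)"
    using Phi by (intro measurable_compose[OF measurable_fst] D.borel_measurable_lebesgue_integral)
      (simp add: measurable_cong_sets[OF sets_pair_measure_cong[OF refl sets_D] refl] split_beta')
  have Phi_D_bound: "\<bar>\<integral>i. Phi v i \<partial>D\<bar> \<le> B" for v
    using Phi_bound by (intro D.abs_expectation_le) (simp_all add: measurable_cong_sets[OF sets_D refl])
  have "expectation (\<lambda>w. if P w then Phi (obs (Rk w) (k - Rk w) w) (Y (Rk w) w) else 0)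
      = (\<Sum>j\<le>k. expectation (\<lambda>w. indicator (?E j) w * Phi (obs j (k - j) w) (Y j w)))"
    by (intro expectation_split_index[OF Rk] integrable_indicator_obs[where B=B]) (simp_all add: event Y Phi Phi_bound)
  also have "\<dots> = (\<Sum>j\<le>k. expectation (\<lambda>w. indicator (?E j) w * (\<integral>i. Phi (obs j (k - j) w) i \<partial>D)))"
    by (intro sum.cong refl) (simp add: expectation_fresh_on_event[OF event indep Y Phi Phi_bound] law)
  also have "\<dots> = expectation (\<lambda>w. if P w then (\<integral>i. Phi (obs (Rk w) (k - Rk w) w) i \<partial>D) else 0)"
    by (intro expectation_split_index[OF Rk, symmetric] integrable_indicator_obs[where Phi="\<lambda>v i. \<integral>i. Phi v i \<partial>D" and B=B and Y="\<lambda>_. 0"])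
      (simp_all add: event Y Phi_D Phi_D_bound)
  finally show ?thesis .
qed

lemma measurable_obs_R [measurable]: "(\<lambda>v. fst (snd v)) \<in> measurable obs_space trunc_space"
  unfolding obs_space_def by simp

lemma measurable_obs_S [measurable]: "(\<lambda>v. snd (snd v)) \<in> measurable obs_space trunc_space"
  unfolding obs_space_def by simp

lemma integral_lawR_indicator: "(\<integral>i. (if y = i then 1 else 0) \<partial>lawR) = r y"
proof -
  have "(\<integral>i. (if y = i then 1 else 0) \<partial>lawR) = (\<Sum>i. r i * (if y = i then 1 else 0))"
    by (rule integral_lawR[where B=1]) simp
  also have "(\<lambda>i. r i * (if y = i then 1 else 0)) = (\<lambda>i. if i = y then r i else 0)"
    by auto
  finally show ?thesis using sums_single[of y r] by (simp add: sums_iff)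
qed

lemma integral_lawS_indicator: "(\<integral>i. (if y = i then 1 else 0) \<partial>lawS) = s y"
proof -
  have "(\<integral>i. (if y = i then 1 else 0) \<partial>lawS) = (\<Sum>i. s i * (if y = i then 1 else 0))"
    by (rule integral_lawS[where B=1]) simp
  also have "(\<lambda>i. s i * (if y = i then 1 else 0)) = (\<lambda>i. if i = y then s i else 0)"
    by auto
  finally show ?thesis using sums_single[of y s] by (simp add: sums_iff)
qed

lemma integral_lawR_tally: "(\<integral>i. tally k (\<lambda>y. if y = i then 1 else 0) f \<partial>lawR) = tally k r f"
proof -
  interpret lawR: prob_space lawR by (rule prob_space_lawR)
  have "(\<integral>i. tally k (\<lambda>y. if y = i then 1 else 0) f \<partial>lawR)
      = (\<Sum>q=1..k. \<integral>i. (case f q of None \<Rightarrow> 0 | Some y \<Rightarrow> if y = i then 1 else 0) \<partial>lawR)"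
    unfolding tally_def
    by (intro Bochner_Integration.integral_sum lawR.integrable_bounded[where B=1]) (auto split: option.split)
  also have "\<dots> = tally k r f"
    unfolding tally_def by (intro sum.cong refl) (simp add: integral_lawR_indicator split: option.split)
  finally show ?thesis .
qed

lemma integral_lawS_tally: "(\<integral>i. tally k (\<lambda>y. if y = i then 1 else 0) f \<partial>lawS) = tally k s f"
proof -
  interpret lawS: prob_space lawS by (rule prob_space_lawS)
  have "(\<integral>i. tally k (\<lambda>y. if y = i then 1 else 0) f \<partial>lawS)
      = (\<Sum>q=1..k. \<integral>i. (case f q of None \<Rightarrow> 0 | Some y \<Rightarrow> if y = i then 1 else 0) \<partial>lawS)"
    unfolding tally_def
    by (intro Bochner_Integration.integral_sum lawS.integrable_bounded[where B=1]) (auto split: option.split)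
  also have "\<dots> = tally k s f"
    unfolding tally_def by (intro sum.cong refl) (simp add: integral_lawS_indicator split: option.split)
  finally show ?thesis .
qed

lemma alternating_reading_policy:
  assumes "alternating_policy M U N C"
  shows "reading_policy M U N LR LS C"
  unfolding reading_policy_def
proof (intro allI impI)
  fix n :: nat
  have "sets (vimage_algebra (space M) U N) \<subseteq> sets (info_alg M U N LR LS C (n - 1))"
    unfolding info_alg_def
    using measurable_space[OF measurable_U]
    by (intro sets_vimage_algebra_subset_Pair) (auto simp: space_pair_measure space_PiM)
  moreover have "C n \<in> measurable (vimage_algebra (space M) U N) (count_space UNIV)"
    using assms by (simp add: alternating_policy_def)
  ultimately show "C n \<in> measurable (info_alg M U N LR LS C (n - 1)) (count_space UNIV)"
    using measurable_mono[of "count_space UNIV" "count_space UNIV" "vimage_algebra (space M) U N"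
        "info_alg M U N LR LS C (n - 1)"]
    by (auto simp: info_alg_def)
qed

lemma U_event_of_alternating:
  assumes "alternating_policy M U N C"
  obtains B where "B \<in> sets N" "\<And>w. w \<in> space M \<Longrightarrow> C n w \<longleftrightarrow> U w \<in> B"
proof -
  have "C n \<in> measurable (vimage_algebra (space M) U N) (count_space UNIV)"
    using assms by (simp add: alternating_policy_def)
  from measurable_sets[OF this, of "{True}"]
  have "C n -` {True} \<inter> space M \<in> sets (vimage_algebra (space M) U N)"
    by simp
  then show ?thesis
    using that measurable_space[OF measurable_U] by (auto simp: sets_vimage_algebra2 Pi_iff) blast
qed

lemma expectation_indicator_U_LR:
  assumes B: "B \<in> sets N"
  shows "expectation (\<lambda>w. indicator B (U w) * s (LR (Suc j) w)) = mu * prob {w \<in> space M. U w \<in> B}"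
proof -
  define F where "F z = indicator B (fst (fst z)) * s (snd z)" for z :: "('u \<times> (nat \<Rightarrow> nat option) \<times> (nat \<Rightarrow> nat option)) \<times> nat"
  have F: "F \<in> borel_measurable (obs_space \<Otimes>\<^sub>M count_space UNIV)"
    unfolding F_def obs_space_def using B by measurable
  have F_bound: "\<bar>F z\<bar> \<le> 1" for z
    using s_bounds[of "snd z"] by (simp add: F_def indicator_def)
  have "expectation (\<lambda>w. indicator B (U w) * s (LR (Suc j) w)) = expectation (\<lambda>w. F (obs j 0 w, LR (Suc j) w))"
    by (simp add: F_def obs_def)
  also have "\<dots> = expectation (\<lambda>w. \<integral>i. F (obs j 0 w, i) \<partial>lawR)"
    using expectation_indep_integral_snd[OF measurable_obs measurable_LR obs_indep_LR F F_bound] by (simp add: distr_LR)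
  also have "\<dots> = expectation (\<lambda>w. mu * indicator {w \<in> space M. U w \<in> B} w)"
    by (intro Bochner_Integration.integral_cong) (auto simp: F_def obs_def integral_lawR_s indicator_def)
  finally show ?thesis using B by simp
qed

lemma expectation_indicator_U_LS:
  assumes B: "B \<in> sets N"
  shows "expectation (\<lambda>w. indicator B (U w) * r (LS (Suc j) w)) = mu * prob {w \<in> space M. U w \<in> B}"
proof -
  define F where "F z = indicator B (fst (fst z)) * r (snd z)" for z :: "('u \<times> (nat \<Rightarrow> nat option) \<times> (nat \<Rightarrow> nat option)) \<times> nat"
  have F: "F \<in> borel_measurable (obs_space \<Otimes>\<^sub>M count_space UNIV)"
    unfolding F_def obs_space_def using B by measurable
  have F_bound: "\<bar>F z\<bar> \<le> 1" for z
    using r_bounds[of "snd z"] by (simp add: F_def indicator_def)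
  have "expectation (\<lambda>w. indicator B (U w) * r (LS (Suc j) w)) = expectation (\<lambda>w. F (obs 0 j w, LS (Suc j) w))"
    by (simp add: F_def obs_def)
  also have "\<dots> = expectation (\<lambda>w. \<integral>i. F (obs 0 j w, i) \<partial>lawS)"
    using expectation_indep_integral_snd[OF measurable_obs measurable_LS obs_indep_LS F F_bound] by (simp add: distr_LS)
  also have "\<dots> = expectation (\<lambda>w. mu * indicator {w \<in> space M. U w \<in> B} w)"
    by (intro Bochner_Integration.integral_cong) (auto simp: F_def obs_def integral_lawS_r indicator_def)
  finally show ?thesis using B by simp
qed

lemma expectation_indicator_U_Gamma:
  assumes B: "B \<in> sets N"
  shows "expectation (\<lambda>w. indicator B (U w) * Gamma s LR m w) = mu * m * prob {w \<in> space M. U w \<in> B}"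
    and "expectation (\<lambda>w. indicator B (U w) * Gamma r LS m w) = mu * m * prob {w \<in> space M. U w \<in> B}"
proof -
  have "integrable M (\<lambda>w. indicator B (U w) * s (LR (Suc j) w))"
    "integrable M (\<lambda>w. indicator B (U w) * r (LS (Suc j) w))" for j
    using B s_bounds r_bounds by (auto intro!: integrable_bounded[where B=1] simp: indicator_def)
  moreover have "(\<lambda>w. indicator B (U w) * Gamma g L m w) = (\<lambda>w. \<Sum>j<m. indicator B (U w) * g (L (Suc j) w))"
    for g :: "nat \<Rightarrow> real" and L
    by (simp only: Gamma_def One_nat_def sum.atLeast1_atMost_eq sum_distrib_left)
  ultimately show "expectation (\<lambda>w. indicator B (U w) * Gamma s LR m w) = mu * m * prob {w \<in> space M. U w \<in> B}"
    and "expectation (\<lambda>w. indicator B (U w) * Gamma r LS m w) = mu * m * prob {w \<in> space M. U w \<in> B}"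
    by (simp_all only: Bochner_Integration.integral_sum expectation_indicator_U_LR[OF B]
        expectation_indicator_U_LS[OF B]) simp_all
qed

end

section \<open>Expected matches under a reading policy\<close>

locale policy_run = label_streams +
  fixes C :: "nat \<Rightarrow> 'a \<Rightarrow> bool"
  assumes reading: "reading_policy M U N LR LS C"
begin

definition current_obs :: "nat \<Rightarrow> 'a \<Rightarrow> 'b \<times> (nat \<Rightarrow> nat option) \<times> (nat \<Rightarrow> nat option)" where
  "current_obs k w = obs (Rcnt C k w) (Scnt C k w) w"

lemma C_Suc_event: "\<exists>B\<in>sets obs_space. \<forall>w\<in>space M. C (Suc k) w \<longleftrightarrow> current_obs k w \<in> B"
proof -
  have info: "info_alg M U N LR LS C k = vimage_algebra (space M) (current_obs k) obs_space"
    unfolding info_alg_def current_obs_def obs_def obs_space_def ..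
  have "\<forall>n\<ge>1. C n \<in> measurable (info_alg M U N LR LS C (n - 1)) (count_space UNIV)"
    using reading unfolding reading_policy_def .
  then have "C (Suc k) \<in> measurable (vimage_algebra (space M) (current_obs k) obs_space) (count_space UNIV)"
    unfolding info[symmetric] by (metis diff_Suc_1 le_add1 plus_1_eq_Suc)
  from measurable_sets[OF this, of "{True}"]
  have "C (Suc k) -` {True} \<inter> space M \<in> sets (vimage_algebra (space M) (current_obs k) obs_space)"
    by (simp only: space_vimage_algebra sets_count_space UNIV_I Pow_UNIV)
  moreover have "current_obs k \<in> space M \<rightarrow> space obs_space"
    using measurable_space[OF measurable_obs] by (auto simp: current_obs_def)
  ultimately obtain B where "B \<in> sets obs_space" "C (Suc k) -` {True} \<inter> space M = current_obs k -` B \<inter> space M"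
    by (auto simp: sets_vimage_algebra2)
  then show ?thesis by blast
qed

lemma observable_Rcnt_C:
  assumes "observable j (k - j) {w \<in> space M. Rcnt C k w = j}"
  shows "observable j (k - j) {w \<in> space M. Rcnt C k w = j \<and> C (Suc k) w}"
proof -
  obtain B where B: "B \<in> sets obs_space" "\<forall>w\<in>space M. C (Suc k) w \<longleftrightarrow> current_obs k w \<in> B"
    using C_Suc_event by blast
  have "current_obs k w = obs j (k - j) w" if "Rcnt C k w = j" for w
    by (simp add: current_obs_def Scnt_def that)
  with B(2) have "{w \<in> space M. Rcnt C k w = j \<and> C (Suc k) w} = {w \<in> space M. Rcnt C k w = j} \<inter> (obs j (k - j) -` B \<inter> space M)"
    by auto
  moreover have "observable j (k - j) (obs j (k - j) -` B \<inter> space M)"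
    using B(1) unfolding observable_iff_vimage by blast
  ultimately show ?thesis using observable_Int[OF assms] by simp
qed

lemma observable_Rcnt: "j \<le> k \<Longrightarrow> observable j (k - j) {w \<in> space M. Rcnt C k w = j}"
proof (induction k arbitrary: j)
  case 0
  then have "{w \<in> space M. Rcnt C 0 w = j} = obs j (0 - j) -` space obs_space \<inter> space M"
    using measurable_space[OF measurable_obs] by auto
  then show ?case unfolding observable_iff_vimage by blast
next
  case (Suc k)
  have split: "{w \<in> space M. Rcnt C (Suc k) w = j}
      = ({w \<in> space M. Rcnt C k w = j} - {w \<in> space M. Rcnt C k w = j \<and> C (Suc k) w})
        \<union> {w \<in> space M. Rcnt C k w + 1 = j \<and> C (Suc k) w}"
    by (auto simp: Rcnt_Suc)
  have "observable j (Suc k - j) ({w \<in> space M. Rcnt C k w = j} - {w \<in> space M. Rcnt C k w = j \<and> C (Suc k) w})"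
  proof (cases "j \<le> k")
    case True
    have R: "observable j (k - j) {w \<in> space M. Rcnt C k w = j}" by (rule Suc.IH[OF True])
    have "observable j (k - j) ({w \<in> space M. Rcnt C k w = j} - {w \<in> space M. Rcnt C k w = j \<and> C (Suc k) w})"
      by (rule observable_Diff[OF R observable_Rcnt_C[OF R]])
    then show ?thesis by (rule observable_mono[rotated 2]) simp_all
  next
    case False
    then have "Rcnt C k w \<noteq> j" for w using Rcnt_le[of C k w] by linarith
    then show ?thesis by (simp add: observable_def)
  qed
  moreover have "observable j (Suc k - j) {w \<in> space M. Rcnt C k w + 1 = j \<and> C (Suc k) w}"
  proof (cases j)
    case (Suc i)
    with Suc.prems have "observable i (k - i) {w \<in> space M. Rcnt C k w = i}"
      by (intro Suc.IH) simp
    then have "observable i (k - i) {w \<in> space M. Rcnt C k w = i \<and> C (Suc k) w}"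
      by (rule observable_Rcnt_C)
    then have "observable j (Suc k - j) {w \<in> space M. Rcnt C k w = i \<and> C (Suc k) w}"
      by (rule observable_mono[rotated 2]) (use Suc in auto)
    with Suc show ?thesis by simp
  qed (simp add: observable_def)
  ultimately show ?case unfolding split by (rule observable_Un)
qed

lemma observable_Rcnt_not_C:
  "j \<le> k \<Longrightarrow> observable j (k - j) {w \<in> space M. Rcnt C k w = j \<and> \<not> C (Suc k) w}"
proof -
  assume "j \<le> k"
  then have "observable j (k - j) ({w \<in> space M. Rcnt C k w = j} - {w \<in> space M. Rcnt C k w = j \<and> C (Suc k) w})"
    by (intro observable_Diff observable_Rcnt observable_Rcnt_C)
  moreover have "{w \<in> space M. Rcnt C k w = j} - {w \<in> space M. Rcnt C k w = j \<and> C (Suc k) w}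
      = {w \<in> space M. Rcnt C k w = j \<and> \<not> C (Suc k) w}"
    by blast
  ultimately show ?thesis by simp
qed

lemma measurable_Rcnt [measurable]: "(\<lambda>w. Rcnt C k w) \<in> measurable M (count_space UNIV)"
proof (rule measurable_count_space_eq2_countable[THEN iffD2], safe)
  fix j :: nat
  have "(\<lambda>w. Rcnt C k w) -` {j} \<inter> space M = {w \<in> space M. Rcnt C k w = j}" by auto
  also have "\<dots> \<in> sets M"
  proof (cases "j \<le> k")
    case True then show ?thesis using observable_sets[OF observable_Rcnt] by blast
  next
    case False
    then have "Rcnt C k w \<noteq> j" for w using Rcnt_le[of C k w] by linarith
    then show ?thesis by simp
  qed
  finally show "(\<lambda>w. Rcnt C k w) -` {j} \<inter> space M \<in> sets M" .
qed auto

lemma measurable_C [measurable]: "Measurable.pred M (C (Suc k))"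
proof -
  have "{w \<in> space M. C (Suc k) w} = (\<Union>j\<le>k. {w \<in> space M. Rcnt C k w = j \<and> C (Suc k) w})"
    using Rcnt_le[of C k] by auto
  also have "\<dots> \<in> sets M"
    using observable_sets[OF observable_Rcnt_C[OF observable_Rcnt]] by auto
  finally show ?thesis by (simp add: pred_def)
qed

lemma measurable_current_obs [measurable]: "current_obs k \<in> measurable M obs_space"
  unfolding current_obs_def Scnt_def
  by (rule measurable_compose_countable[where f="\<lambda>j. obs j (k - j)"]) simp_all

lemma measurable_next_LR [measurable]: "(\<lambda>w. LR (Suc (Rcnt C k w)) w) \<in> measurable M (count_space UNIV)"
  by (rule measurable_compose_countable[where f="\<lambda>j. LR (Suc j)"]) simp_all

lemma measurable_next_LS [measurable]: "(\<lambda>w. LS (Suc (Scnt C k w)) w) \<in> measurable M (count_space UNIV)"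
  unfolding Scnt_def by (rule measurable_compose_countable[where f="\<lambda>j. LS (Suc (k - j))"]) simp_all

lemma expectation_fresh_LR:
  fixes Phi :: "'b \<times> (nat \<Rightarrow> nat option) \<times> (nat \<Rightarrow> nat option) \<Rightarrow> nat \<Rightarrow> real"
  assumes "(\<lambda>z. Phi (fst z) (snd z)) \<in> borel_measurable (obs_space \<Otimes>\<^sub>M count_space UNIV)"
    and "\<And>v i. \<bar>Phi v i\<bar> \<le> B"
  shows "expectation (\<lambda>w. if C (Suc k) w then Phi (current_obs k w) (LR (Suc (Rcnt C k w)) w) else 0)
       = expectation (\<lambda>w. if C (Suc k) w then \<integral>i. Phi (current_obs k w) i \<partial>lawR else 0)"
  unfolding current_obs_def Scnt_def
proof (rule expectation_fresh_label[where Rk="Rcnt C k" and k=k and P="C (Suc k)" and Y="\<lambda>j. LR (Suc j)"])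
  show "\<And>j. j \<le> k \<Longrightarrow> observable j (k - j) {w \<in> space M. Rcnt C k w = j \<and> C (Suc k) w}"
    by (rule observable_Rcnt_C[OF observable_Rcnt])
  show "\<And>j. j \<le> k \<Longrightarrow> distr M (count_space UNIV) (LR (Suc j)) = lawR"
    by (rule distr_LR) simp
qed (use assms Rcnt_le obs_indep_LR in simp_all)

lemma expectation_fresh_LS:
  fixes Phi :: "'b \<times> (nat \<Rightarrow> nat option) \<times> (nat \<Rightarrow> nat option) \<Rightarrow> nat \<Rightarrow> real"
  assumes "(\<lambda>z. Phi (fst z) (snd z)) \<in> borel_measurable (obs_space \<Otimes>\<^sub>M count_space UNIV)"
    and "\<And>v i. \<bar>Phi v i\<bar> \<le> B"
  shows "expectation (\<lambda>w. if \<not> C (Suc k) w then Phi (current_obs k w) (LS (Suc (Scnt C k w)) w) else 0)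
       = expectation (\<lambda>w. if \<not> C (Suc k) w then \<integral>i. Phi (current_obs k w) i \<partial>lawS else 0)"
  unfolding current_obs_def Scnt_def
proof (rule expectation_fresh_label[where Rk="Rcnt C k" and k=k and P="\<lambda>w. \<not> C (Suc k) w" and Y="\<lambda>j. LS (Suc (k - j))"])
  show "\<And>j. j \<le> k \<Longrightarrow> observable j (k - j) {w \<in> space M. Rcnt C k w = j \<and> \<not> C (Suc k) w}"
    by (rule observable_Rcnt_not_C)
  show "\<And>j. j \<le> k \<Longrightarrow> distr M (count_space UNIV) (LS (Suc (k - j))) = lawS"
    by (rule distr_LS) simp
qed (use assms Rcnt_le obs_indep_LS in simp_all)

definition gammaR :: "nat \<Rightarrow> 'a \<Rightarrow> real" where
  "gammaR k w = Gamma s LR (Rcnt C k w) w"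

definition gammaS :: "nat \<Rightarrow> 'a \<Rightarrow> real" where
  "gammaS k w = Gamma r LS (Scnt C k w) w"

definition pR :: "nat \<Rightarrow> real" where
  "pR k = prob {w \<in> space M. C (Suc k) w}"

lemma gammaR_eq_tally: "gammaR k w = tally k s (fst (snd (current_obs k w)))"
  by (simp add: gammaR_def current_obs_def obs_def tally_trunc Rcnt_le)

lemma gammaS_eq_tally: "gammaS k w = tally k r (snd (snd (current_obs k w)))"
  by (simp add: gammaS_def current_obs_def obs_def tally_trunc Scnt_le)

lemma gammaR_bounds: "0 \<le> gammaR k w" "gammaR k w \<le> k"
  unfolding gammaR_eq_tally using tally_bounds[of s] s_bounds by auto

lemma gammaS_bounds: "0 \<le> gammaS k w" "gammaS k w \<le> k"
  unfolding gammaS_eq_tally using tally_bounds[of r] r_bounds by auto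

lemma measurable_gammaR [measurable]: "gammaR k \<in> borel_measurable M"
  unfolding gammaR_eq_tally[abs_def]
  by (rule measurable_compose[OF measurable_compose[OF measurable_current_obs measurable_obs_R] measurable_tally])

lemma measurable_gammaS [measurable]: "gammaS k \<in> borel_measurable M"
  unfolding gammaS_eq_tally[abs_def]
  by (rule measurable_compose[OF measurable_compose[OF measurable_current_obs measurable_obs_S] measurable_tally])

lemma gammaR_Suc: "gammaR (Suc k) w = gammaR k w + (if C (Suc k) w then s (LR (Suc (Rcnt C k w)) w) else 0)"
  by (simp add: gammaR_def Rcnt_Suc Gamma_Suc)

lemma gammaS_Suc: "gammaS (Suc k) w = gammaS k w + (if \<not> C (Suc k) w then r (LS (Suc (Scnt C k w)) w) else 0)"
  by (simp add: gammaS_def Scnt_Suc Gamma_Suc)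

lemma matches_Suc:
  "real (matches LR LS C (Suc k) w) = real (matches LR LS C k w)
    + (if C (Suc k) w then tally k (\<lambda>y. if y = LR (Suc (Rcnt C k w)) w then 1 else 0) (snd (snd (current_obs k w))) else 0)
    + (if \<not> C (Suc k) w then tally k (\<lambda>y. if y = LS (Suc (Scnt C k w)) w then 1 else 0) (fst (snd (current_obs k w))) else 0)"
proof -
  have R: "fst (snd (current_obs k w)) = trunc LR (Rcnt C k w) w"
    and S: "snd (snd (current_obs k w)) = trunc LS (Scnt C k w) w"
    by (simp_all add: current_obs_def obs_def)
  show ?thesis
  proof (cases "C (Suc k) w")
    case True
    then show ?thesis
      unfolding matches_eq_coincidences Rcnt_Suc Scnt_Suc S
      by (simp add: coincidences_Suc_left tally_trunc Scnt_le)
  next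
    case False
    then show ?thesis
      unfolding matches_eq_coincidences Rcnt_Suc Scnt_Suc R
      by (simp add: coincidences_Suc_right tally_trunc Rcnt_le)
  qed
qed

lemma integrable_gammaR: "integrable M (gammaR k)"
  using gammaR_bounds by (intro integrable_bounded[where B=k]) auto

lemma integrable_gammaS: "integrable M (gammaS k)"
  using gammaS_bounds by (intro integrable_bounded[where B=k]) auto

lemma measurable_matches [measurable]: "(\<lambda>w. real (matches LR LS C k w)) \<in> borel_measurable M"
  unfolding matches_eq_coincidences coincidences_def Scnt_def by measurable

lemma integrable_matches: "integrable M (\<lambda>w. real (matches LR LS C k w))"
proof (rule integrable_bounded[where B="k * k"])
  fix w
  have "real (matches LR LS C k w) \<le> real (Rcnt C k w) * real (Scnt C k w)"
    using coincidences_le by (simp add: matches_eq_coincidences)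
  also have "\<dots> \<le> real k * real k"
    using Rcnt_le[of C k w] Scnt_le[of C k w] by (intro mult_mono) auto
  finally show "\<bar>real (matches LR LS C k w)\<bar> \<le> k * k" by simp
qed simp

lemma integrable_if_C:
  fixes f :: "'a \<Rightarrow> real"
  assumes "integrable M f"
  shows "integrable M (\<lambda>w. if C (Suc k) w then f w else 0)"
    and "integrable M (\<lambda>w. if \<not> C (Suc k) w then f w else 0)"
proof -
  have "{w \<in> space M. C (Suc k) w} \<in> sets M" "{w \<in> space M. \<not> C (Suc k) w} \<in> sets M"
    using measurable_C[of k] by (simp_all add: pred_def pred_intros_logic)
  from this[THEN integrable_real_mult_indicator, OF assms]
  show "integrable M (\<lambda>w. if C (Suc k) w then f w else 0)" "integrable M (\<lambda>w. if \<not> C (Suc k) w then f w else 0)"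
    by (auto intro: Bochner_Integration.integrable_cong[OF refl, THEN iffD1, rotated] simp: indicator_def)
qed

lemma expectation_if_C_const: "expectation (\<lambda>w. if C (Suc k) w then c else 0) = c * pR k"
proof -
  have "expectation (\<lambda>w. if C (Suc k) w then c else 0) = expectation (\<lambda>w. c * indicator {w \<in> space M. C (Suc k) w} w)"
    by (intro Bochner_Integration.integral_cong) (auto simp: indicator_def)
  also have "\<dots> = c * pR k"
    using measurable_C[of k] by (simp add: pR_def pred_def)
  finally show ?thesis .
qed

lemma expectation_if_not_C_const: "expectation (\<lambda>w. if \<not> C (Suc k) w then c else 0) = c * (1 - pR k)"
proof -
  have "expectation (\<lambda>w. if \<not> C (Suc k) w then c else 0) = expectation (\<lambda>w. c - (if C (Suc k) w then c else 0))"
    by (intro Bochner_Integration.integral_cong) auto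
  also have "\<dots> = c - c * pR k"
    using integrable_if_C(1)[of "\<lambda>_. c" k] by (simp add: expectation_if_C_const prob_space)
  finally show ?thesis by (simp add: algebra_simps)
qed

lemma expectation_if_C_split:
  fixes f :: "'a \<Rightarrow> real"
  assumes "integrable M f"
  shows "expectation (\<lambda>w. if C (Suc k) w then f w else 0) + expectation (\<lambda>w. if \<not> C (Suc k) w then f w else 0)
    = expectation f"
proof -
  have "expectation (\<lambda>w. if C (Suc k) w then f w else 0) + expectation (\<lambda>w. if \<not> C (Suc k) w then f w else 0)
      = expectation (\<lambda>w. (if C (Suc k) w then f w else 0) + (if \<not> C (Suc k) w then f w else 0))"
    using integrable_if_C[OF assms] by (simp add: Bochner_Integration.integral_add)
  also have "\<dots> = expectation f"
    by (intro Bochner_Integration.integral_cong) auto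
  finally show ?thesis .
qed

lemma integrable_fresh:
  fixes Phi :: "'b \<times> (nat \<Rightarrow> nat option) \<times> (nat \<Rightarrow> nat option) \<Rightarrow> nat \<Rightarrow> real"
  assumes Q: "Measurable.pred M Q" and Y: "Y \<in> measurable M (count_space UNIV)"
    and Phi: "(\<lambda>z. Phi (fst z) (snd z)) \<in> borel_measurable (obs_space \<Otimes>\<^sub>M count_space UNIV)"
    and Phi_bound: "\<And>v i. \<bar>Phi v i\<bar> \<le> B"
  shows "integrable M (\<lambda>w. if Q w then Phi (current_obs k w) (Y w) else 0)"
proof (rule integrable_bounded)
  have "(\<lambda>w. Phi (current_obs k w) (Y w)) \<in> borel_measurable M"
    using measurable_compose[OF measurable_Pair[OF measurable_current_obs Y] Phi] by simp
  then show "(\<lambda>w. if Q w then Phi (current_obs k w) (Y w) else 0) \<in> borel_measurable M"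
    using Q by (intro measurable_If) (auto simp: pred_def)
  show "\<bar>if Q w then Phi (current_obs k w) (Y w) else 0\<bar> \<le> B" for w
    using Phi_bound[of "current_obs k w" "Y w"] abs_ge_zero[of "Phi (current_obs k w) (Y w)"] by auto
qed

lemma expectation_step:
  fixes F :: "nat \<Rightarrow> 'a \<Rightarrow> real"
    and PhiR PhiS :: "'b \<times> (nat \<Rightarrow> nat option) \<times> (nat \<Rightarrow> nat option) \<Rightarrow> nat \<Rightarrow> real"
  assumes step: "\<And>w. F (Suc k) w = F k w
      + (if C (Suc k) w then PhiR (current_obs k w) (LR (Suc (Rcnt C k w)) w) else 0)
      + (if \<not> C (Suc k) w then PhiS (current_obs k w) (LS (Suc (Scnt C k w)) w) else 0)"
    and F: "integrable M (F k)"
    and PhiR: "(\<lambda>z. PhiR (fst z) (snd z)) \<in> borel_measurable (obs_space \<Otimes>\<^sub>M count_space UNIV)"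
      "\<And>v i. \<bar>PhiR v i\<bar> \<le> B"
    and PhiS: "(\<lambda>z. PhiS (fst z) (snd z)) \<in> borel_measurable (obs_space \<Otimes>\<^sub>M count_space UNIV)"
      "\<And>v i. \<bar>PhiS v i\<bar> \<le> B"
  shows "expectation (F (Suc k)) = expectation (F k)
      + expectation (\<lambda>w. if C (Suc k) w then \<integral>i. PhiR (current_obs k w) i \<partial>lawR else 0)
      + expectation (\<lambda>w. if \<not> C (Suc k) w then \<integral>i. PhiS (current_obs k w) i \<partial>lawS else 0)"
proof -
  have "F (Suc k) = (\<lambda>w. F k w
      + (if C (Suc k) w then PhiR (current_obs k w) (LR (Suc (Rcnt C k w)) w) else 0)
      + (if \<not> C (Suc k) w then PhiS (current_obs k w) (LS (Suc (Scnt C k w)) w) else 0))"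
    using step by (intro ext)
  moreover have "integrable M (\<lambda>w. if C (Suc k) w then PhiR (current_obs k w) (LR (Suc (Rcnt C k w)) w) else 0)"
    by (rule integrable_fresh[OF _ _ PhiR]) simp_all
  moreover have "integrable M (\<lambda>w. if \<not> C (Suc k) w then PhiS (current_obs k w) (LS (Suc (Scnt C k w)) w) else 0)"
    by (rule integrable_fresh[OF _ _ PhiS]) simp_all
  ultimately show ?thesis
    using F by (simp add: expectation_fresh_LR[OF PhiR] expectation_fresh_LS[OF PhiS])
qed

lemma expectation_gammaR_Suc: "expectation (gammaR (Suc k)) = expectation (gammaR k) + mu * pR k"
proof -
  have "expectation (gammaR (Suc k)) = expectation (gammaR k)
      + expectation (\<lambda>w. if C (Suc k) w then \<integral>i. s i \<partial>lawR else 0)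
      + expectation (\<lambda>w. if \<not> C (Suc k) w then \<integral>i. 0 \<partial>lawS else 0)"
    by (rule expectation_step[where B=1]) (simp_all add: gammaR_Suc integrable_gammaR s_bounds)
  then show ?thesis by (simp add: integral_lawR_s expectation_if_C_const cong: if_cong)
qed

lemma expectation_gammaS_Suc: "expectation (gammaS (Suc k)) = expectation (gammaS k) + mu * (1 - pR k)"
proof -
  have "expectation (gammaS (Suc k)) = expectation (gammaS k)
      + expectation (\<lambda>w. if C (Suc k) w then \<integral>i. 0 \<partial>lawR else 0)
      + expectation (\<lambda>w. if \<not> C (Suc k) w then \<integral>i. r i \<partial>lawS else 0)"
    by (rule expectation_step[where B=1]) (simp_all add: gammaS_Suc integrable_gammaS r_bounds)
  then show ?thesis by (simp add: integral_lawS_r expectation_if_not_C_const cong: if_cong)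
qed

lemma expectation_matches_Suc:
  "expectation (\<lambda>w. real (matches LR LS C (Suc k) w)) = expectation (\<lambda>w. real (matches LR LS C k w))
    + expectation (\<lambda>w. if C (Suc k) w then gammaS k w else 0)
    + expectation (\<lambda>w. if \<not> C (Suc k) w then gammaR k w else 0)"
proof -
  let ?count = "\<lambda>f i. tally k (\<lambda>y. if y = i then 1 else 0) f"
  have "\<bar>?count f i\<bar> \<le> k" for f i
    using tally_bounds[of "\<lambda>y. if y = i then 1 else 0" k f] by simp
  then have "expectation (\<lambda>w. real (matches LR LS C (Suc k) w)) = expectation (\<lambda>w. real (matches LR LS C k w))
      + expectation (\<lambda>w. if C (Suc k) w then \<integral>i. ?count (snd (snd (current_obs k w))) i \<partial>lawR else 0)
      + expectation (\<lambda>w. if \<not> C (Suc k) w then \<integral>i. ?count (fst (snd (current_obs k w))) i \<partial>lawS else 0)"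
    by (intro expectation_step[where B=k]) (simp_all add: matches_Suc integrable_matches)
  then show ?thesis
    by (simp add: integral_lawR_tally integral_lawS_tally gammaR_eq_tally gammaS_eq_tally cong: if_cong)
qed

lemma expectation_if_C_affine:
  fixes f :: "'a \<Rightarrow> real"
  assumes f: "integrable M f"
  shows "expectation (\<lambda>w. if C (Suc k) w then f w + c1 else 0) + expectation (\<lambda>w. if \<not> C (Suc k) w then f w + c2 else 0)
    = expectation f + c1 * pR k + c2 * (1 - pR k)"
proof -
  have const: "integrable M (\<lambda>w. if C (Suc k) w then c1 else 0)" "integrable M (\<lambda>w. if \<not> C (Suc k) w then c2 else 0)"
    by (simp_all add: integrable_if_C)
  have "expectation (\<lambda>w. if C (Suc k) w then f w + c1 else 0)
      = expectation (\<lambda>w. (if C (Suc k) w then f w else 0) + (if C (Suc k) w then c1 else 0))"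
    by (intro Bochner_Integration.integral_cong) auto
  also have "\<dots> = expectation (\<lambda>w. if C (Suc k) w then f w else 0) + c1 * pR k"
    using integrable_if_C(1)[OF f] const(1) by (simp add: expectation_if_C_const)
  finally have R: "expectation (\<lambda>w. if C (Suc k) w then f w + c1 else 0) = expectation (\<lambda>w. if C (Suc k) w then f w else 0) + c1 * pR k" .
  have "expectation (\<lambda>w. if \<not> C (Suc k) w then f w + c2 else 0)
      = expectation (\<lambda>w. (if \<not> C (Suc k) w then f w else 0) + (if \<not> C (Suc k) w then c2 else 0))"
    by (intro Bochner_Integration.integral_cong) auto
  also have "\<dots> = expectation (\<lambda>w. if \<not> C (Suc k) w then f w else 0) + c2 * (1 - pR k)"
    using integrable_if_C(2)[OF f] const(2) by (simp add: expectation_if_not_C_const)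
  finally show ?thesis
    using R expectation_if_C_split[OF f] by simp
qed

lemma expectation_gamma_prod_Suc:
  "expectation (\<lambda>w. gammaR (Suc k) w * gammaS (Suc k) w) = expectation (\<lambda>w. gammaR k w * gammaS k w)
    + mu * (expectation (\<lambda>w. if C (Suc k) w then gammaS k w else 0)
          + expectation (\<lambda>w. if \<not> C (Suc k) w then gammaR k w else 0))"
proof -
  let ?tR = "\<lambda>v. tally k s (fst (snd v))" and ?tS = "\<lambda>v. tally k r (snd (snd v))"
  have bound: "\<bar>g' i * tally k g f\<bar> \<le> k" if "\<And>x. 0 \<le> g x \<and> g x \<le> 1" "0 \<le> g' i \<and> g' i \<le> 1" for g g' f i
  proof -
    have "0 \<le> tally k g f" "tally k g f \<le> k" using tally_bounds[of g] that(1) by auto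
    with that(2) show ?thesis using mult_mono[of "g' i" 1 "tally k g f" k] by (simp add: abs_mult)
  qed
  have "expectation (\<lambda>w. gammaR (Suc k) w * gammaS (Suc k) w) = expectation (\<lambda>w. gammaR k w * gammaS k w)
      + expectation (\<lambda>w. if C (Suc k) w then \<integral>i. ?tS (current_obs k w) * s i \<partial>lawR else 0)
      + expectation (\<lambda>w. if \<not> C (Suc k) w then \<integral>i. ?tR (current_obs k w) * r i \<partial>lawS else 0)"
  proof (rule expectation_step[where B=k])
    show "integrable M (\<lambda>w. gammaR k w * gammaS k w)"
      using gammaR_bounds gammaS_bounds
      by (intro integrable_bounded[where B="k * k"]) (auto simp: abs_mult intro!: mult_mono)
  qed (auto simp: gammaR_Suc gammaS_Suc gammaR_eq_tally[symmetric] gammaS_eq_tally[symmetric] algebra_simps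
         s_bounds r_bounds intro!: bound)
  also have "(\<lambda>w. if C (Suc k) w then \<integral>i. ?tS (current_obs k w) * s i \<partial>lawR else 0)
      = (\<lambda>w. mu * (if C (Suc k) w then gammaS k w else 0))"
    by (auto simp: fun_eq_iff integral_lawR_s gammaS_eq_tally)
  also have "(\<lambda>w. if \<not> C (Suc k) w then \<integral>i. ?tR (current_obs k w) * r i \<partial>lawS else 0)
      = (\<lambda>w. mu * (if \<not> C (Suc k) w then gammaR k w else 0))"
    by (auto simp: fun_eq_iff integral_lawS_r gammaR_eq_tally)
  finally show ?thesis by (simp add: algebra_simps)
qed

lemma expectation_gamma_sum_sq_Suc:
  "expectation (\<lambda>w. (gammaR (Suc k) w + gammaS (Suc k) w)\<^sup>2) = expectation (\<lambda>w. (gammaR k w + gammaS k w)\<^sup>2)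
    + expectation (\<lambda>w. if C (Suc k) w then 2 * (gammaR k w + gammaS k w) * mu + m2R else 0)
    + expectation (\<lambda>w. if \<not> C (Suc k) w then 2 * (gammaR k w + gammaS k w) * mu + m2S else 0)"
proof -
  let ?t = "\<lambda>v. tally k s (fst (snd v)) + tally k r (snd (snd v))"
  have t_bounds: "0 \<le> ?t v" "?t v \<le> 2 * real k" for v
    using tally_bounds[of s k "fst (snd v)"] tally_bounds[of r k "snd (snd v)"] s_bounds r_bounds by auto
  have bound: "\<bar>2 * ?t v * g i + (g i)\<^sup>2\<bar> \<le> 4 * k + 1" if "0 \<le> g i" "g i \<le> 1" for g :: "nat \<Rightarrow> real" and v i
  proof -
    have "2 * ?t v * g i \<le> 2 * (2 * real k) * 1" using t_bounds[of v] that by (intro mult_mono) auto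
    moreover have "(g i)\<^sup>2 \<le> 1" using that by (simp add: power_le_one)
    moreover have "0 \<le> 2 * ?t v * g i" using t_bounds[of v] that by simp
    ultimately show ?thesis by simp
  qed
  have "expectation (\<lambda>w. (gammaR (Suc k) w + gammaS (Suc k) w)\<^sup>2) = expectation (\<lambda>w. (gammaR k w + gammaS k w)\<^sup>2)
      + expectation (\<lambda>w. if C (Suc k) w then \<integral>i. 2 * ?t (current_obs k w) * s i + (s i)\<^sup>2 \<partial>lawR else 0)
      + expectation (\<lambda>w. if \<not> C (Suc k) w then \<integral>i. 2 * ?t (current_obs k w) * r i + (r i)\<^sup>2 \<partial>lawS else 0)"
  proof (rule expectation_step[where B="4 * k + 1" and F="\<lambda>k w. (gammaR k w + gammaS k w)\<^sup>2"])
    show "integrable M (\<lambda>w. (gammaR k w + gammaS k w)\<^sup>2)"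
    proof (rule integrable_bounded[where B="(2 * real k)\<^sup>2"])
      fix w
      have "gammaR k w + gammaS k w \<le> 2 * real k" "0 \<le> gammaR k w + gammaS k w"
        using gammaR_bounds[of k w] gammaS_bounds[of k w] by linarith+
      then have "(gammaR k w + gammaS k w)\<^sup>2 \<le> (2 * real k)\<^sup>2"
        by (rule power_mono)
      then show "\<bar>(gammaR k w + gammaS k w)\<^sup>2\<bar> \<le> (2 * real k)\<^sup>2"
        by simp
    qed simp
    show "(gammaR (Suc k) w + gammaS (Suc k) w)\<^sup>2 = (gammaR k w + gammaS k w)\<^sup>2
        + (if C (Suc k) w then 2 * ?t (current_obs k w) * s (LR (Suc (Rcnt C k w)) w) + (s (LR (Suc (Rcnt C k w)) w))\<^sup>2 else 0)
        + (if \<not> C (Suc k) w then 2 * ?t (current_obs k w) * r (LS (Suc (Scnt C k w)) w) + (r (LS (Suc (Scnt C k w)) w))\<^sup>2 else 0)"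
      for w
      by (simp add: gammaR_Suc gammaS_Suc gammaR_eq_tally[symmetric] gammaS_eq_tally[symmetric] power2_eq_square algebra_simps)
    show "\<bar>2 * ?t v * s i + (s i)\<^sup>2\<bar> \<le> 4 * k + 1" for v i
      by (rule bound) (simp_all add: s_bounds)
    show "\<bar>2 * ?t v * r i + (r i)\<^sup>2\<bar> \<le> 4 * k + 1" for v i
      by (rule bound) (simp_all add: r_bounds)
  qed simp_all
  then show ?thesis
    by (simp add: integral_lawR_affine_sq integral_lawS_affine_sq gammaR_eq_tally gammaS_eq_tally cong: if_cong)
qed

definition rho :: "nat \<Rightarrow> real" where
  "rho n = (\<Sum>k<n. pR k)"

lemma gammaR_0 [simp]: "gammaR 0 w = 0"
  by (simp add: gammaR_def Gamma_def)

lemma gammaS_0 [simp]: "gammaS 0 w = 0"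
  by (simp add: gammaS_def Gamma_def Scnt_def)

lemma expectation_gammaR: "expectation (gammaR n) = mu * rho n"
  by (induction n) (simp_all add: expectation_gammaR_Suc rho_def algebra_simps)

lemma expectation_gammaS: "expectation (gammaS n) = mu * (n - rho n)"
  by (induction n) (simp_all add: expectation_gammaS_Suc rho_def algebra_simps)

lemma expectation_gamma_sum: "expectation (\<lambda>w. gammaR n w + gammaS n w) = mu * n"
  using integrable_gammaR integrable_gammaS
  by (simp add: expectation_gammaR expectation_gammaS algebra_simps)

lemma mu_expectation_matches:
  "mu * expectation (\<lambda>w. real (matches LR LS C n w)) = expectation (\<lambda>w. gammaR n w * gammaS n w)"
proof (induction n)
  case 0
  show ?case by (simp add: matches_eq_coincidences coincidences_def)
next
  case (Suc k)
  then show ?case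
    by (simp add: expectation_matches_Suc expectation_gamma_prod_Suc algebra_simps)
qed

lemma expectation_gamma_sum_sq:
  "expectation (\<lambda>w. (gammaR n w + gammaS n w)\<^sup>2) = mu\<^sup>2 * real n * (real n - 1) + m2S * n + (m2R - m2S) * rho n"
proof (induction n)
  case (Suc k)
  have sum: "integrable M (\<lambda>w. 2 * (gammaR k w + gammaS k w) * mu)"
    using integrable_gammaR integrable_gammaS by simp
  have "(\<lambda>w. 2 * (gammaR k w + gammaS k w) * mu) = (\<lambda>w. (2 * mu) * (gammaR k w + gammaS k w))"
    by (simp add: fun_eq_iff ac_simps)
  then have "expectation (\<lambda>w. 2 * (gammaR k w + gammaS k w) * mu) = 2 * mu * expectation (\<lambda>w. gammaR k w + gammaS k w)"
    by (simp only: integral_mult_right_zero)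
  also have "\<dots> = 2 * mu\<^sup>2 * k"
    by (simp add: expectation_gamma_sum power2_eq_square)
  finally have "expectation (\<lambda>w. if C (Suc k) w then 2 * (gammaR k w + gammaS k w) * mu + m2R else 0)
      + expectation (\<lambda>w. if \<not> C (Suc k) w then 2 * (gammaR k w + gammaS k w) * mu + m2S else 0)
      = 2 * mu\<^sup>2 * k + m2R * pR k + m2S * (1 - pR k)"
    using expectation_if_C_affine[OF sum, of k m2R m2S] by simp
  then show ?case
    unfolding expectation_gamma_sum_sq_Suc using Suc.IH by (simp add: rho_def algebra_simps)
qed (simp add: rho_def)

lemma four_mu_expectation_matches:
  "4 * mu * expectation (\<lambda>w. real (matches LR LS C n w))
    = expectation (\<lambda>w. (gammaR n w + gammaS n w)\<^sup>2) - expectation (\<lambda>w. (gammaR n w - gammaS n w)\<^sup>2)"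
proof -
  have sq_bound: "\<bar>x\<^sup>2\<bar> \<le> (2 * real n)\<^sup>2" if "\<bar>x\<bar> \<le> 2 * real n" for x :: real
    using power_mono[OF that abs_ge_zero, of 2] by simp
  have "\<bar>gammaR n w + gammaS n w\<bar> \<le> 2 * real n" "\<bar>gammaR n w - gammaS n w\<bar> \<le> 2 * real n" for w
    using gammaR_bounds[of n w] gammaS_bounds[of n w] by auto
  then have "integrable M (\<lambda>w. (gammaR n w + gammaS n w)\<^sup>2)" "integrable M (\<lambda>w. (gammaR n w - gammaS n w)\<^sup>2)"
    by (auto intro!: integrable_bounded[where B="(2 * real n)\<^sup>2"] sq_bound)
  then have "expectation (\<lambda>w. (gammaR n w + gammaS n w)\<^sup>2) - expectation (\<lambda>w. (gammaR n w - gammaS n w)\<^sup>2)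
      = expectation (\<lambda>w. 4 * (gammaR n w * gammaS n w))"
    by (simp flip: Bochner_Integration.integral_diff add: power2_eq_square algebra_simps)
  also have "\<dots> = 4 * mu * expectation (\<lambda>w. real (matches LR LS C n w))"
    by (simp add: mu_expectation_matches)
  finally show ?thesis ..
qed

lemma greedy_gap:
  assumes "greedy_policy M U N r s LR LS C" and "w \<in> space M"
  shows "\<bar>gammaR n w - gammaS n w\<bar> \<le> 1"
proof (induction n)
  case (Suc n)
  have read_R: "gammaR n w \<le> gammaS n w" if "C (Suc n) w"
  proof (cases n)
    case (Suc m)
    with assms that show ?thesis
      unfolding greedy_policy_def gammaR_def gammaS_def by (metis le_add1 not_le plus_1_eq_Suc)
  qed simp
  have read_S: "gammaS n w \<le> gammaR n w" if "\<not> C (Suc n) w"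
  proof (cases n)
    case (Suc m)
    with assms that show ?thesis
      unfolding greedy_policy_def gammaR_def gammaS_def by (metis le_add1 not_le plus_1_eq_Suc)
  qed simp
  show ?case
    using Suc.IH read_R read_S s_bounds[of "LR (Suc (Rcnt C n w)) w"] r_bounds[of "LS (Suc (Scnt C n w)) w"]
    by (cases "C (Suc n) w") (auto simp: gammaR_Suc gammaS_Suc abs_le_iff)
qed simp

section \<open>Greedy and alternating reading\<close>

lemma greedy_matches_estimate:
  assumes greedy: "greedy_policy M U N r s LR LS C" and mu: "0 < mu"
  shows "\<bar>4 * mu * expectation (\<lambda>w. real (matches LR LS C n w))
           - (mu\<^sup>2 * (real n)\<^sup>2 + (m2R + m2S - 2 * mu\<^sup>2) / 2 * real n)\<bar> \<le> \<bar>m2R - m2S\<bar> / (2 * mu) + 1"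
proof -
  define Q where "Q = expectation (\<lambda>w. (gammaR n w - gammaS n w)\<^sup>2)"
  have gap: "\<bar>gammaR n w - gammaS n w\<bar> \<le> 1" if "w \<in> space M" for w
    using greedy_gap[OF greedy that] .
  have Q: "0 \<le> Q" "Q \<le> 1"
  proof -
    have "\<bar>(gammaR n w - gammaS n w)\<^sup>2\<bar> \<le> 1" if "w \<in> space M" for w
      using gap[OF that] by (simp add: abs_square_le_1)
    then have "\<bar>Q\<bar> \<le> 1" unfolding Q_def by (intro abs_expectation_le) simp_all
    moreover have "0 \<le> Q" unfolding Q_def by simp
    ultimately show "0 \<le> Q" "Q \<le> 1" by simp_all
  qed
  have "\<bar>expectation (\<lambda>w. gammaR n w - gammaS n w)\<bar> \<le> 1"
    using gap by (intro abs_expectation_le) simp_all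
  then have "\<bar>mu * (2 * rho n - n)\<bar> \<le> 1"
    using integrable_gammaR integrable_gammaS
    by (simp add: expectation_gammaR expectation_gammaS algebra_simps)
  then have "mu * \<bar>2 * rho n - n\<bar> \<le> 1"
    using mu by (simp only: abs_mult abs_of_pos)
  then have "\<bar>2 * rho n - n\<bar> \<le> 1 / mu"
    using mu by (simp add: pos_le_divide_eq mult.commute)
  then have "\<bar>m2R - m2S\<bar> * \<bar>2 * rho n - n\<bar> / 2 \<le> \<bar>m2R - m2S\<bar> * (1 / mu) / 2"
    by (intro divide_right_mono mult_left_mono) auto
  moreover have "(m2R - m2S) * (rho n - n / 2) = (m2R - m2S) * (2 * rho n - n) / 2"
    by (simp add: field_simps)
  then have "\<bar>(m2R - m2S) * (rho n - n / 2)\<bar> = \<bar>m2R - m2S\<bar> * \<bar>2 * rho n - n\<bar> / 2"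
    by (simp only: abs_mult abs_divide)
  ultimately have "\<bar>(m2R - m2S) * (rho n - n / 2)\<bar> \<le> \<bar>m2R - m2S\<bar> / (2 * mu)"
    by simp
  moreover have "4 * mu * expectation (\<lambda>w. real (matches LR LS C n w))
      - (mu\<^sup>2 * (real n)\<^sup>2 + (m2R + m2S - 2 * mu\<^sup>2) / 2 * real n) = (m2R - m2S) * (rho n - n / 2) - Q"
    unfolding four_mu_expectation_matches expectation_gamma_sum_sq Q_def[symmetric]
    by (simp add: field_simps power2_eq_square)
  ultimately show ?thesis using Q by linarith
qed

text \<open>Before step \<open>k + 1\<close> the other file has always been read \<open>Suc k div 2\<close> times, and the
  choice of file depends on \<open>U\<close> only, so each step adds \<open>mu * (Suc k div 2)\<close> expected matches.\<close>

lemma alternating_expectation_matches_Suc: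
  assumes alternating: "alternating_policy M U N C"
  shows "expectation (\<lambda>w. real (matches LR LS C (Suc k) w))
      = expectation (\<lambda>w. real (matches LR LS C k w)) + mu * (Suc k div 2)"
proof -
  let ?a = "Suc k div 2"
  obtain B where B: "B \<in> sets N" and C_B: "\<And>w. w \<in> space M \<Longrightarrow> C (Suc k) w \<longleftrightarrow> U w \<in> B"
    using U_event_of_alternating[OF alternating, of "Suc k"] by blast
  have counts: "(C (Suc k) w \<longrightarrow> Scnt C k w = ?a) \<and> (\<not> C (Suc k) w \<longrightarrow> Rcnt C k w = ?a)" if "w \<in> space M" for w
    using alternating that by (intro alternating_counts) (auto simp: alternating_policy_def)
  have "expectation (\<lambda>w. if C (Suc k) w then gammaS k w else 0) = expectation (\<lambda>w. indicator B (U w) * Gamma r LS ?a w)"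
    using counts C_B by (intro Bochner_Integration.integral_cong) (auto simp: gammaS_def indicator_def)
  also have "\<dots> = mu * ?a * prob {w \<in> space M. U w \<in> B}"
    by (rule expectation_indicator_U_Gamma(2)[OF B])
  finally have read_R: "expectation (\<lambda>w. if C (Suc k) w then gammaS k w else 0) = mu * ?a * prob {w \<in> space M. U w \<in> B}" .
  have "expectation (\<lambda>w. if \<not> C (Suc k) w then gammaR k w else 0)
      = expectation (\<lambda>w. indicator (space N - B) (U w) * Gamma s LR ?a w)"
    using counts C_B measurable_space[OF measurable_U]
    by (intro Bochner_Integration.integral_cong) (auto simp: gammaR_def indicator_def)
  also have "\<dots> = mu * ?a * prob {w \<in> space M. U w \<in> space N - B}"
    using B by (intro expectation_indicator_U_Gamma(1)) auto
  also have "{w \<in> space M. U w \<in> space N - B} = space M - {w \<in> space M. U w \<in> B}"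
    using measurable_space[OF measurable_U] by auto
  finally have read_S: "expectation (\<lambda>w. if \<not> C (Suc k) w then gammaR k w else 0) = mu * ?a * (1 - prob {w \<in> space M. U w \<in> B})"
    using B by (simp add: prob_compl)
  show ?thesis
    by (simp add: expectation_matches_Suc read_R read_S algebra_simps)
qed

lemma alternating_expected_matches:
  assumes "alternating_policy M U N C"
  shows "4 * expectation (\<lambda>w. real (matches LR LS C n w)) = mu * (real n * real n - real (n mod 2))"
proof -
  have E: "expectation (\<lambda>w. real (matches LR LS C n w)) = mu * real (\<Sum>k<n. Suc k div 2)"
  proof (induction n)
    case 0
    show ?case by (simp add: matches_eq_coincidences coincidences_def)
  next
    case (Suc n)
    then show ?case by (simp add: alternating_expectation_matches_Suc[OF assms] algebra_simps)
  qed
  have "4 * real (\<Sum>k<n. Suc k div 2) = real n * real n - real (n mod 2)"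
    using arg_cong[OF sum_Suc_div_2[of n], of real] by simp
  then show ?thesis
    unfolding E by (metis mult.left_commute)
qed

end

context label_streams
begin

lemma greedy_alternating_difference:
  assumes greedy: "greedy_policy M U N r s LR LS CG"
    and alternating: "alternating_policy M U N CA" and mu: "0 < mu"
  shows "\<bar>expectation (\<lambda>w. real (matches LR LS CG n w)) - expectation (\<lambda>w. real (matches LR LS CA n w))
           - (variance (\<lambda>w. s (LR 1 w)) + variance (\<lambda>w. r (LS 1 w))) / (8 * mu) * real n\<bar>
         \<le> (\<bar>m2R - m2S\<bar> / (2 * mu) + 1 + mu\<^sup>2) / (4 * mu)"
proof -
  interpret G: policy_run M N U r s LR LS CG
    using greedy by (intro policy_run.intro label_streams_axioms policy_run_axioms.intro) (simp add: greedy_policy_def)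
  interpret A: policy_run M N U r s LR LS CA
    using alternating_reading_policy[OF alternating]
    by (intro policy_run.intro label_streams_axioms policy_run_axioms.intro)
  define EG EA where "EG = expectation (\<lambda>w. real (matches LR LS CG n w))"
    and "EA = expectation (\<lambda>w. real (matches LR LS CA n w))"
  define c where "c = (m2R + m2S - 2 * mu\<^sup>2) / 2"
  define K where "K = \<bar>m2R - m2S\<bar> / (2 * mu) + 1"
  have G: "\<bar>4 * mu * EG - (mu\<^sup>2 * (real n)\<^sup>2 + c * real n)\<bar> \<le> K"
    unfolding EG_def c_def K_def by (rule G.greedy_matches_estimate[OF greedy mu])
  have "4 * EA = mu * (real n * real n - real (n mod 2))"
    unfolding EA_def by (rule A.alternating_expected_matches[OF alternating])
  then have "mu * (4 * EA) = mu * (mu * (real n * real n - real (n mod 2)))"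
    by (rule arg_cong)
  then have "4 * mu * (EG - EA) - c * real n = (4 * mu * EG - (mu\<^sup>2 * (real n)\<^sup>2 + c * real n)) + mu\<^sup>2 * real (n mod 2)"
    by (simp add: power2_eq_square algebra_simps)
  moreover have "0 \<le> mu\<^sup>2 * real (n mod 2)" "mu\<^sup>2 * real (n mod 2) \<le> mu\<^sup>2"
    by (auto intro: mult_left_le)
  ultimately have "\<bar>4 * mu * (EG - EA) - c * real n\<bar> \<le> K + mu\<^sup>2"
    using G unfolding abs_le_iff by linarith
  moreover have "EG - EA - c / (4 * mu) * real n = (4 * mu * (EG - EA) - c * real n) / (4 * mu)"
    using mu by (simp add: field_simps)
  ultimately have "\<bar>EG - EA - c / (4 * mu) * real n\<bar> \<le> (K + mu\<^sup>2) / (4 * mu)"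
    using mu by (simp add: abs_divide divide_right_mono)
  moreover have "c / (4 * mu) = (variance (\<lambda>w. s (LR 1 w)) + variance (\<lambda>w. r (LS 1 w))) / (8 * mu)"
    unfolding c_def variance_LR variance_LS by (simp add: field_simps)
  ultimately show ?thesis
    unfolding EG_def EA_def K_def by simp
qed

end

theorem theorem4p1:
  fixes M :: "'a measure" and N :: "'u measure" and U :: "'a \<Rightarrow> 'u"
    and r s :: "nat \<Rightarrow> real"
    and LR LS :: "nat \<Rightarrow> 'a \<Rightarrow> nat"
    and CG CA :: "nat \<Rightarrow> 'a \<Rightarrow> bool"
  assumes "prob_space M"
    and r_prob: "r 0 = 0" "\<forall>i. 0 \<le> r i" "r sums 1"
    and s_prob: "s 0 = 0" "\<forall>i. 0 \<le> s i" "s sums 1"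
    and mu_pos: "(\<Sum>i. r i * s i) > 0"
    and U_meas: "U \<in> measurable M N"
    and LR_meas: "\<forall>j. LR j \<in> measurable M (count_space UNIV)"
    and LS_meas: "\<forall>j. LS j \<in> measurable M (count_space UNIV)"
    and LR_dist: "\<forall>j\<ge>1. \<forall>i. prob_space.prob M {w \<in> space M. LR j w = i} = r i"
    and LS_dist: "\<forall>j\<ge>1. \<forall>i. prob_space.prob M {w \<in> space M. LS j w = i} = s i"
    and labels_indep: "prob_space.indep_vars M (\<lambda>_. count_space UNIV)
        (\<lambda>k w. case k of Inl j \<Rightarrow> LR j w | Inr j \<Rightarrow> LS j w) ({1..} <+> {1..})"
    and U_indep: "prob_space.indep_set M (sets (vimage_algebra (space M) U N))
        (sets (vimage_algebra (space M)
           (\<lambda>w k. case k of Inl j \<Rightarrow> LR (Suc j) w | Inr j \<Rightarrow> LS (Suc j) w)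
           (PiM UNIV (\<lambda>_::nat + nat. count_space UNIV))))"
    and sigma_pos: "sqrt (prob_space.variance M (\<lambda>w. s (LR 1 w)))
                    + sqrt (prob_space.variance M (\<lambda>w. r (LS 1 w))) > 0"
    and greedy: "greedy_policy M U N r s LR LS CG"
    and alternating: "alternating_policy M U N CA"
  shows "(\<lambda>n. (prob_space.expectation M (\<lambda>w. real (matches LR LS CG n w))
              - prob_space.expectation M (\<lambda>w. real (matches LR LS CA n w))) / real n)
         \<longlonglongrightarrow> (prob_space.variance M (\<lambda>w. s (LR 1 w))
              + prob_space.variance M (\<lambda>w. r (LS 1 w))) / (8 * (\<Sum>i. r i * s i))"
proof -
  interpret label_streams M N U r s LR LS
    using assms by (intro label_streams.intro label_streams_axioms.intro) auto
  have "0 < mu" using mu_pos by (simp add: mu_def)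
  from tendsto_divide_of_bounded_deviation[OF greedy_alternating_difference[OF greedy alternating this]]
  show ?thesis by (simp add: mu_def)
qed

end
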